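(* Let $\mathcal{T}$ be a compact interval, $\boldsymbol{\phi}=(\phi_1,\dots,\phi_m)'$ a vector of linearly independent functions in $L^2(\mathcal{T})$, and let $\mathbf{X}(t)=\mathbf{A}'\boldsymbol{\phi}(t)$, $t\in\mathcal{T}$, be a rank $m$ $p$-variate process with separable covariance, mean $\boldsymbol{\mu}$ and covariance $\mathbf{K}(s,t)=\boldsymbol{\Sigma}^{\mathrm{row}}\kappa(s,t)$, where $\mathbf{A}=(\mathbf{a}_1,\dots,\mathbf{a}_p)\in\mathbb{R}^{m\times p}$ is a random coefficient matrix. Then: (i) $\mathbf{A}$ has a matrix-variate distribution with mean $\mathbf{M}_{\mathbf{A}}$ and covariance $\mathrm{Cov}(\mathrm{vec}(\mathbf{A}))=\boldsymbol{\Sigma}^{\mathrm{row}}\otimes\boldsymbol{\Sigma}^{\mathrm{col}}$ for some $\boldsymbol{\Sigma}^{\mathrm{col}}$ symmetric positive definite of size $m\times m$, such that for all $s,t\in\mathcal{T}$: $\mathbf{M}_{\mathbf{A}}'\boldsymbol{\phi}(t)=\boldsymbol{\mu}(t)$ and $\boldsymbol{\phi}'(s)\boldsymbol{\Sigma}^{\mathrm{col}}\boldsymbol{\phi}(t)=\kappa(s,t)$. (ii) $\mathrm{fMMD}^2(\mathbf{X};mp)=\mathrm{tr}\big((\boldsymbol{\Sigma}^{\mathrm{row}})^{-1}(\mathbf{A}-\mathbf{M}_{\mathbf{A}})'(\boldsymbol{\Sigma}^{\mathrm{col}})^{-1}(\mathbf{A}-\mathbf{M}_{\mathbf{A}})\big)=\mathrm{MMD}^2(\mathbf{A})$.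 (iii) If additionally $\mathbf{X}\sim\mathcal{MGP}(\boldsymbol{\mu},\boldsymbol{\Sigma}^{\mathrm{row}},\kappa)$ is a multivariate Gaussian process, then $\mathbf{A}\sim\mathcal{MN}(\mathbf{M}_{\mathbf{A}},\boldsymbol{\Sigma}^{\mathrm{col}},\boldsymbol{\Sigma}^{\mathrm{row}})$ with $\mathbf{M}_{\mathbf{A}}$ and the positive definite matrices $\boldsymbol{\Sigma}^{\mathrm{row}},\boldsymbol{\Sigma}^{\mathrm{col}}$ as in (i).
   Context: $\mathcal{H}=L^2(\mathcal{T})^p$ with inner product $\langle\mathbf{x},\mathbf{y}\rangle=\sum_j\int_{\mathcal{T}}x_jy_j$. The process has separable covariance: $\mathrm{Cov}(X_i(s),X_j(t))=\Sigma^{\mathrm{row}}_{ij}\kappa(s,t)$ with $\boldsymbol{\Sigma}^{\mathrm{row}}$ a $p\times p$ symmetric positive definite matrix and $\kappa$ a positive definite kernel; rank $m$ means the covariance operator of each component has at most $m$ nonzero eigenvalues. With the covariance operator $\mathcal{C}\mathbf{x}(s)=\int\mathbf{K}(s,t)\mathbf{x}(t)dt$ having orthonormal eigenfunctions $\boldsymbol{\psi}_k$ and nonincreasing eigenvalues $\pi_k$: $\mathrm{fMMD}^2(\mathbf{X};M)=\sum_{k=1}^M\pi_k^{-1}\langle\mathbf{X}-\boldsymbol{\mu},\boldsymbol{\psi}_k\rangle^2$. For an $m\times p$ random matrix with mean $\mathbf{M}$ and covariances $\boldsymbol{\Sigma}^{\mathrm{col}}$ ($m\times m$), $\boldsymbol{\Sigma}^{\mathrm{row}}$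 ($p\times p$), $\mathrm{MMD}^2(\mathbf{A})=\mathrm{tr}((\boldsymbol{\Sigma}^{\mathrm{row}})^{-1}(\mathbf{A}-\mathbf{M})'(\boldsymbol{\Sigma}^{\mathrm{col}})^{-1}(\mathbf{A}-\mathbf{M}))$. A random $a\times b$ matrix $\mathbf{Z}\sim\mathcal{MN}(\mathbf{M},\mathbf{U},\mathbf{V})$ ($\mathbf{U}$ $a\times a$, $\mathbf{V}$ $b\times b$) means $\mathrm{vec}(\mathbf{Z})\sim\mathcal{N}(\mathrm{vec}(\mathbf{M}),\mathbf{V}\otimes\mathbf{U})$, with vec stacking columns. $\mathbf{X}\sim\mathcal{MGP}(\boldsymbol{\mu},\boldsymbol{\Sigma}^{\mathrm{row}},\kappa)$ means that for every $t_1<\dots<t_q$ in $\mathcal{T}$, $(\mathbf{X}(t_1),\dots,\mathbf{X}(t_q))\sim\mathcal{MN}((\boldsymbol{\mu}(t_1),\dots,\boldsymbol{\mu}(t_q)),\boldsymbol{\Sigma}^{\mathrm{row}},[\kappa(t_k,t_l)]_{k,l})$. *)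

theory Defs
  imports "HOL-Probability.Probability"
begin

text \<open>A real function is in L2(T) (modulo a.e. equality, which is handled by stating
  all equalities in H almost everywhere on T).\<close>
definition sq_int :: "real set \<Rightarrow> (real \<Rightarrow> real) \<Rightarrow> bool" where
  "sq_int T f \<longleftrightarrow> set_borel_measurable lborel T f \<and> set_integrable lborel T (\<lambda>t. (f t)\<^sup>2)"

definition L2H :: "real set \<Rightarrow> (real \<Rightarrow> real^'p) \<Rightarrow> bool" where
  "L2H T x \<longleftrightarrow> (\<forall>j. sq_int T (\<lambda>t. x t $ j))"

definition Hip :: "real set \<Rightarrow> (real \<Rightarrow> real^'p) \<Rightarrow> (real \<Rightarrow> real^'p) \<Rightarrow> real" where
  "Hip T x y = (\<Sum>j\<in>UNIV. LINT t:T|lborel. x t $ j * y t $ j)"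

definition L2_lin_indep :: "real set \<Rightarrow> (real \<Rightarrow> real^'m) \<Rightarrow> bool" where
  "L2_lin_indep T \<phi> \<longleftrightarrow>
     (\<forall>c::real^'m. (AE t in lborel. t \<in> T \<longrightarrow> c \<bullet> \<phi> t = 0) \<longrightarrow> c = 0)"

definition Cop :: "real set \<Rightarrow> (real \<Rightarrow> real \<Rightarrow> real^'p^'p) \<Rightarrow> (real \<Rightarrow> real^'p) \<Rightarrow> real \<Rightarrow> real^'p" where
  "Cop T K x s = (LINT t:T|lborel. K s t *v x t)"

definition Kop :: "real set \<Rightarrow> (real \<Rightarrow> real \<Rightarrow> real) \<Rightarrow> (real \<Rightarrow> real) \<Rightarrow> real \<Rightarrow> real" where
  "Kop T k f s = (LINT t:T|lborel. k s t * f t)"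

definition op_rank_ge :: "real set \<Rightarrow> (real \<Rightarrow> real \<Rightarrow> real) \<Rightarrow> nat \<Rightarrow> bool" where
  "op_rank_ge T k n \<longleftrightarrow>
     (\<exists>f :: nat \<Rightarrow> real \<Rightarrow> real. (\<forall>i<n. sq_int T (f i)) \<and>
        (\<forall>c :: nat \<Rightarrow> real.
           (AE s in lborel. s \<in> T \<longrightarrow> (\<Sum>i<n. c i * Kop T k (f i) s) = 0) \<longrightarrow> (\<forall>i<n. c i = 0)))"

text \<open>Rank of the (self-adjoint) integral operator = dimension of its range
  = number of nonzero eigenvalues counted with multiplicity.\<close>
definition op_rank :: "real set \<Rightarrow> (real \<Rightarrow> real \<Rightarrow> real) \<Rightarrow> nat \<Rightarrow> bool" where
  "op_rank T k n \<longleftrightarrow> op_rank_ge T k n \<and> \<not> op_rank_ge T k (Suc n)"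

text \<open>(psi, pi) is an eigen-decomposition of the covariance operator C with kernel K:
  orthonormal eigenfunctions psi_k (k = 0,1,2,...; index 0 corresponds to the paper's
  index 1), nonincreasing eigenvalues pi_k, and complete in the sense that every element
  of H orthogonal to all psi_k lies in the kernel of C.\<close>
definition eigsys :: "real set \<Rightarrow> (real \<Rightarrow> real \<Rightarrow> real^'p^'p) \<Rightarrow> (nat \<Rightarrow> real \<Rightarrow> real^'p) \<Rightarrow> (nat \<Rightarrow> real) \<Rightarrow> bool" where
  "eigsys T K \<psi> \<pi> \<longleftrightarrow>
     (\<forall>k. L2H T (\<psi> k)) \<and>
     (\<forall>k l. Hip T (\<psi> k) (\<psi> l) = (if k = l then 1 else 0)) \<and>
     (\<forall>k. AE s in lborel. s \<in> T \<longrightarrow> Cop T K (\<psi> k) s = \<pi> k *\<^sub>R \<psi> k s) \<and>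
     (\<forall>k l. k \<le> l \<longrightarrow> \<pi> l \<le> \<pi> k) \<and>
     (\<forall>x. L2H T x \<longrightarrow> (\<forall>k. Hip T x (\<psi> k) = 0) \<longrightarrow>
           (AE s in lborel. s \<in> T \<longrightarrow> Cop T K x s = 0))"

definition fMMD2 :: "real set \<Rightarrow> (nat \<Rightarrow> real \<Rightarrow> real^'p) \<Rightarrow> (nat \<Rightarrow> real) \<Rightarrow>
    (real \<Rightarrow> real^'p) \<Rightarrow> (real \<Rightarrow> real^'p) \<Rightarrow> nat \<Rightarrow> real" where
  "fMMD2 T \<psi> \<pi> x \<mu> M = (\<Sum>k<M. inverse (\<pi> k) * (Hip T (\<lambda>t. x t - \<mu> t) (\<psi> k))\<^sup>2)"

definition MMD2 :: "real^'p^'m \<Rightarrow> real^'m^'m \<Rightarrow> real^'p^'p \<Rightarrow> real^'p^'m \<Rightarrow> real" where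
  "MMD2 Mn Scol Srow A =
     trace (matrix_inv Srow ** transpose (A - Mn) ** matrix_inv Scol ** (A - Mn))"

definition sym_posdef :: "real^'n^'n \<Rightarrow> bool" where
  "sym_posdef S \<longleftrightarrow> transpose S = S \<and> (\<forall>v. v \<noteq> 0 \<longrightarrow> 0 < v \<bullet> (S *v v))"

definition pd_kernel :: "real set \<Rightarrow> (real \<Rightarrow> real \<Rightarrow> real) \<Rightarrow> bool" where
  "pd_kernel T \<kappa> \<longleftrightarrow> (\<forall>s\<in>T. \<forall>t\<in>T. \<kappa> s t = \<kappa> t s) \<and>
     (\<forall>(q::nat) (t::nat \<Rightarrow> real) (c::nat \<Rightarrow> real). (\<forall>l<q. t l \<in> T) \<longrightarrow>
        0 \<le> (\<Sum>l<q. \<Sum>l'<q. c l * c l' * \<kappa> (t l) (t l')))"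

definition normal_rv :: "'a measure \<Rightarrow> ('a \<Rightarrow> real) \<Rightarrow> real \<Rightarrow> real \<Rightarrow> bool" where
  "normal_rv M Y m v \<longleftrightarrow>
     (0 < v \<and> distributed M lborel Y (normal_density m (sqrt v))) \<or>
     (v = 0 \<and> Y \<in> borel_measurable M \<and> (AE \<omega> in M. Y \<omega> = m))"

definition gaussian_vec :: "'a measure \<Rightarrow> ('a \<Rightarrow> 'i \<Rightarrow> real) \<Rightarrow> 'i set \<Rightarrow> ('i \<Rightarrow> real) \<Rightarrow> ('i \<Rightarrow> 'i \<Rightarrow> real) \<Rightarrow> bool" where
  "gaussian_vec M Y I m S \<longleftrightarrow>
     (\<forall>c :: 'i \<Rightarrow> real. normal_rv M (\<lambda>\<omega>. \<Sum>i\<in>I. c i * Y \<omega> i)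
        (\<Sum>i\<in>I. c i * m i) (\<Sum>i\<in>I. \<Sum>j\<in>I. c i * c j * S i j))"

text \<open>Matrix normal: Z (rows I, columns J) ~ MN(Mn, U, V) iff vec(Z) ~ N(vec(Mn), V \<otimes> U),
  i.e. Cov(Z_ij, Z_i'j') = V_jj' * U_ii'.\<close>
definition matrix_normal :: "'a measure \<Rightarrow> ('a \<Rightarrow> 'i \<Rightarrow> 'j \<Rightarrow> real) \<Rightarrow> 'i set \<Rightarrow> 'j set \<Rightarrow>
    ('i \<Rightarrow> 'j \<Rightarrow> real) \<Rightarrow> ('i \<Rightarrow> 'i \<Rightarrow> real) \<Rightarrow> ('j \<Rightarrow> 'j \<Rightarrow> real) \<Rightarrow> bool" where
  "matrix_normal M Z I J Mn U V \<longleftrightarrow>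
     gaussian_vec M (\<lambda>\<omega> (i, j). Z \<omega> i j) (I \<times> J) (\<lambda>(i, j). Mn i j)
       (\<lambda>(i, j) (i', j'). V j j' * U i i')"

definition is_MGP :: "'a measure \<Rightarrow> real set \<Rightarrow> ('a \<Rightarrow> real \<Rightarrow> real^'p) \<Rightarrow> (real \<Rightarrow> real^'p) \<Rightarrow>
    real^'p^'p \<Rightarrow> (real \<Rightarrow> real \<Rightarrow> real) \<Rightarrow> bool" where
  "is_MGP M T X \<mu> Srow \<kappa> \<longleftrightarrow>
     (\<forall>(q::nat) (t::nat \<Rightarrow> real). (\<forall>l<q. t l \<in> T) \<longrightarrow> (\<forall>l l'. l < l' \<and> l' < q \<longrightarrow> t l < t l') \<longrightarrow>
        matrix_normal M (\<lambda>\<omega> i l. X \<omega> (t l) $ i) UNIV {..<q} (\<lambda>i l. \<mu> (t l) $ i)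
          (\<lambda>i i'. Srow $ i $ i') (\<lambda>l l'. \<kappa> (t l) (t l')))"

end

theory Submission
  imports Defs
begin

text \<open>The coordinate functions phi_k are linearly independent in L2, so already their values at
  finitely many points t_1 < ... < t_q span R^m, and there are weights W with
  sum_l W_kl phi(t_l) = e_k. Hence A = sum_l W_l X(t_l)' is a linear function of finitely many
  values of X: its mean is MA = sum_l W_l mu(t_l)', its covariance is Srow (x) Scol with
  Scol = W [kappa(t_l, t_l')] W', and it is matrix normal when X is a Gaussian process.
  Comparing the covariances of X = A' phi gives kappa(s, t) = phi(s)' Scol phi(t), and the rank
  condition makes Scol invertible.

  The covariance operator maps L2 into the mp-dimensional space of the functions V' phi and acts
  on their coefficients as V |-> Scol G V Srow, where G is the Gram matrix of phi. Hence the
  first mp eigenvalues are positive, the corresponding eigenfunctions form an orthonormal basis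
  of that space, and the weighted sum of squared coefficients of X - mu = (A - MA)' phi is the
  quadratic form of the inverse operator, which is MMD^2(A).\<close>

section \<open>Square-integrable functions\<close>

definition square_integrable :: "'a measure \<Rightarrow> ('a \<Rightarrow> real) \<Rightarrow> bool" where
  "square_integrable N f \<longleftrightarrow> f \<in> borel_measurable N \<and> integrable N (\<lambda>x. (f x)\<^sup>2)"

lemma integrable_mult_square_integrable:
  assumes "square_integrable N f" "square_integrable N g"
  shows "integrable N (\<lambda>x. f x * g x)"
proof (rule Bochner_Integration.integrable_bound[where f="\<lambda>x. (f x)\<^sup>2 + (g x)\<^sup>2"])
  show "integrable N (\<lambda>x. (f x)\<^sup>2 + (g x)\<^sup>2)" "(\<lambda>x. f x * g x) \<in> borel_measurable N"
    using assms unfolding square_integrable_def by auto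
  have "\<bar>f x * g x\<bar> \<le> (f x)\<^sup>2 + (g x)\<^sup>2" for x
  proof -
    have "\<bar>f x * g x\<bar> = \<bar>f x\<bar> * \<bar>g x\<bar>" "0 \<le> \<bar>f x\<bar> * \<bar>g x\<bar>"
      by (simp_all add: abs_mult)
    then show ?thesis
      using sum_squares_bound[of "\<bar>f x\<bar>" "\<bar>g x\<bar>"] by simp
  qed
  then show "AE x in N. norm (f x * g x) \<le> norm ((f x)\<^sup>2 + (g x)\<^sup>2)"
    by auto
qed

lemma square_integrable_add:
  assumes "square_integrable N f" "square_integrable N g"
  shows "square_integrable N (\<lambda>x. f x + g x)"
proof -
  have "integrable N (\<lambda>x. (f x)\<^sup>2 + 2 * (f x * g x) + (g x)\<^sup>2)"
    using assms integrable_mult_square_integrable[OF assms] unfolding square_integrable_def by auto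
  moreover have "(\<lambda>x. (f x + g x)\<^sup>2) = (\<lambda>x. (f x)\<^sup>2 + 2 * (f x * g x) + (g x)\<^sup>2)"
    by (simp add: power2_sum algebra_simps)
  ultimately show ?thesis
    using assms unfolding square_integrable_def by auto
qed

lemma square_integrable_cmult: "square_integrable N f \<Longrightarrow> square_integrable N (\<lambda>x. c * f x)"
  unfolding square_integrable_def by (auto simp: power_mult_distrib)

lemma square_integrable_diff:
  "square_integrable N f \<Longrightarrow> square_integrable N g \<Longrightarrow> square_integrable N (\<lambda>x. f x - g x)"
  using square_integrable_add[of N f "\<lambda>x. (-1) * g x"] square_integrable_cmult[of N g "-1"] by simp

lemma square_integrable_lincomb:
  "finite I \<Longrightarrow> (\<And>i. i \<in> I \<Longrightarrow> square_integrable N (f i)) \<Longrightarrow>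
    square_integrable N (\<lambda>x. \<Sum>i\<in>I. c i * f i x)"
proof (induction I rule: finite_induct)
  case empty
  then show ?case by (simp add: square_integrable_def)
next
  case (insert i I)
  then show ?case by (simp add: square_integrable_add square_integrable_cmult)
qed

lemma square_integrable_cong:
  "(\<And>x. x \<in> space N \<Longrightarrow> f x = g x) \<Longrightarrow> square_integrable N f \<Longrightarrow> square_integrable N g"
  unfolding square_integrable_def
  by (metis (no_types, lifting) Bochner_Integration.integrable_cong measurable_cong)

lemma (in finite_measure) square_integrable_const: "square_integrable M (\<lambda>x. c)"
  unfolding square_integrable_def by auto

lemma (in finite_measure) integrable_square_integrable:
  "square_integrable M f \<Longrightarrow> integrable M f"
  using integrable_mult_square_integrable[of M f "\<lambda>x. 1"] square_integrable_const by simp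

lemma integral_lincomb_mult:
  assumes "finite I" "\<And>i. i \<in> I \<Longrightarrow> square_integrable N (f i)" "square_integrable N g"
  shows "(\<integral>x. (\<Sum>i\<in>I. c i * f i x) * g x \<partial>N) = (\<Sum>i\<in>I. c i * (\<integral>x. f i x * g x \<partial>N))"
proof -
  have "(\<integral>x. (\<Sum>i\<in>I. c i * f i x) * g x \<partial>N) = (\<integral>x. (\<Sum>i\<in>I. c i * (f i x * g x)) \<partial>N)"
    by (simp add: sum_distrib_right mult.assoc)
  also have "\<dots> = (\<Sum>i\<in>I. c i * (\<integral>x. f i x * g x \<partial>N))"
    using assms integrable_mult_square_integrable by (subst Bochner_Integration.integral_sum) auto
  finally show ?thesis .
qed

lemma integral_lincomb_mult_lincomb:
  assumes "finite I" "finite J"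
    and "\<And>i. i \<in> I \<Longrightarrow> square_integrable N (f i)" "\<And>j. j \<in> J \<Longrightarrow> square_integrable N (g j)"
  shows "(\<integral>x. (\<Sum>i\<in>I. c i * f i x) * (\<Sum>j\<in>J. d j * g j x) \<partial>N) =
     (\<Sum>i\<in>I. \<Sum>j\<in>J. c i * d j * (\<integral>x. f i x * g j x \<partial>N))"
proof -
  have "(\<integral>x. (\<Sum>i\<in>I. c i * f i x) * (\<Sum>j\<in>J. d j * g j x) \<partial>N)
      = (\<Sum>i\<in>I. c i * (\<integral>x. (\<Sum>j\<in>J. d j * g j x) * f i x \<partial>N))"
    using assms by (subst integral_lincomb_mult) (auto intro: square_integrable_lincomb simp: mult.commute)
  also have "\<dots> = (\<Sum>i\<in>I. c i * (\<Sum>j\<in>J. d j * (\<integral>x. g j x * f i x \<partial>N)))"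
    using assms by (simp add: integral_lincomb_mult)
  also have "\<dots> = (\<Sum>i\<in>I. \<Sum>j\<in>J. c i * d j * (\<integral>x. f i x * g j x \<partial>N))"
    by (simp add: sum_distrib_left mult.commute mult.left_commute mult.assoc)
  finally show ?thesis .
qed

section \<open>Matrices and bilinear forms\<close>

lemma invertible_matrix_inv:
  fixes A :: "'a::semiring_1^'n^'n"
  assumes "invertible A"
  shows "A ** matrix_inv A = mat 1" "matrix_inv A ** A = mat 1"
  using someI_ex[OF assms[unfolded invertible_def]] unfolding matrix_inv_def by auto

lemma invertible_cancel:
  fixes P :: "real^'m^'m" and G :: "real^'p^'m" and Q :: "real^'p^'p"
  assumes "invertible P" "invertible Q" "P ** G ** Q = 0"
  shows "G = 0"
proof -
  have "G = (matrix_inv P ** P) ** G ** (Q ** matrix_inv Q)"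
    using assms(1,2) by (simp add: invertible_matrix_inv)
  also have "\<dots> = matrix_inv P ** (P ** G ** Q) ** matrix_inv Q"
    by (simp add: matrix_mul_assoc)
  finally show ?thesis
    using assms(3) by simp
qed

lemma sym_posdef_invertible:
  fixes S :: "real^'n^'n"
  assumes "sym_posdef S"
  shows "invertible S"
proof -
  have "S *v x = 0 \<Longrightarrow> x = 0" for x
    using assms unfolding sym_posdef_def by (metis inner_zero_right less_irrefl)
  then show ?thesis
    using matrix_left_invertible_ker[of S] invertible_left_inverse[of S] by auto
qed

lemma sym_posdef_diag_pos:
  fixes S :: "real^'n^'n"
  assumes "sym_posdef S"
  shows "0 < S $ j $ j"
proof -
  have "0 < axis j 1 \<bullet> (S *v axis j 1)"
    using assms unfolding sym_posdef_def by (metis axis_eq_0_iff zero_neq_one)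
  then show ?thesis
    by (simp add: inner_axis' matrix_vector_mult_basis column_def)
qed

lemma sym_posdef_entry_sym:
  "sym_posdef S \<Longrightarrow> S $ i $ j = S $ j $ i"
  unfolding sym_posdef_def by (metis transpose_def vec_lambda_beta)

text \<open>Along the line v - l (S v) the form equals l (l d - 2 |S v|^2) for some d, which is
  negative for small l > 0 unless S v = 0.\<close>
lemma psd_quadratic_form_zero:
  fixes S :: "real^'n^'n"
  assumes sym: "transpose S = S" and psd: "\<And>w. 0 \<le> w \<bullet> (S *v w)" and zero: "v \<bullet> (S *v v) = 0"
  shows "S *v v = 0"
proof (rule ccontr)
  define w where "w = S *v v"
  assume "S *v v \<noteq> 0"
  then have n: "0 < w \<bullet> w"
    unfolding w_def by simp
  define d where "d = w \<bullet> (S *v w)"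
  have d: "0 \<le> d"
    unfolding d_def by (rule psd)
  have "v \<bullet> (S *v w) = w \<bullet> w" "w \<bullet> (S *v v) = w \<bullet> w"
    using sym unfolding w_def by (metis dot_lmul_matrix vector_transpose_matrix)+
  then have "(v - l *\<^sub>R w) \<bullet> (S *v (v - l *\<^sub>R w)) = l * (l * d - 2 * (w \<bullet> w))" for l
    using zero unfolding d_def
    by (simp add: algebra_simps)
  moreover have "(w \<bullet> w / (d + 1)) * ((w \<bullet> w / (d + 1)) * d - 2 * (w \<bullet> w)) < 0"
  proof (rule mult_pos_neg)
    have "(w \<bullet> w / (d + 1)) * d \<le> w \<bullet> w"
      using n d by (simp add: field_simps)
    then show "(w \<bullet> w / (d + 1)) * d - 2 * (w \<bullet> w) < 0"
      using n by linarith
  qed (use n d in simp)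
  ultimately show False
    using psd[of "v - (w \<bullet> w / (d + 1)) *\<^sub>R w"] by simp
qed

lemma sym_psd_invertible_posdef:
  fixes S :: "real^'n^'n"
  assumes "transpose S = S" "\<And>v. 0 \<le> v \<bullet> (S *v v)" "invertible S"
  shows "sym_posdef S"
  unfolding sym_posdef_def
proof (intro conjI allI impI assms(1))
  fix v :: "real^'n"
  assume "v \<noteq> 0"
  then have "S *v v \<noteq> 0"
    using inj_matrix_vector_mult[OF assms(3)] by (metis injD matrix_vector_mult_0_right)
  then have "v \<bullet> (S *v v) \<noteq> 0"
    using psd_quadratic_form_zero[OF assms(1,2)] by blast
  then show "0 < v \<bullet> (S *v v)"
    using assms(2)[of v] by simp
qed

lemma inner_matrix_mult_left:
  fixes P :: "real^'m^'m" and Y Z :: "real^'p^'m"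
  shows "(P ** Y) \<bullet> Z = Y \<bullet> (transpose P ** Z)"
proof -
  have "(P ** Y) \<bullet> Z = (\<Sum>k\<in>UNIV. \<Sum>j\<in>UNIV. \<Sum>i\<in>UNIV. P$k$i * Y$i$j * Z$k$j)"
    unfolding inner_vec_def matrix_matrix_mult_def by (simp add: sum_distrib_right)
  also have "\<dots> = (\<Sum>i\<in>UNIV. \<Sum>j\<in>UNIV. \<Sum>k\<in>UNIV. P$k$i * Y$i$j * Z$k$j)"
    by (subst sum.swap, subst (1 2) sum.swap) (rule refl)
  also have "\<dots> = Y \<bullet> (transpose P ** Z)"
    unfolding inner_vec_def matrix_matrix_mult_def transpose_def
    by (simp add: sum_distrib_left mult_ac)
  finally show ?thesis .
qed

lemma inner_matrix_mult_right:
  fixes Q :: "real^'p^'p" and Y Z :: "real^'p^'m"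
  shows "(Y ** Q) \<bullet> Z = Y \<bullet> (Z ** transpose Q)"
proof -
  have "(Y ** Q) \<bullet> Z = (\<Sum>k\<in>UNIV. \<Sum>j\<in>UNIV. \<Sum>i\<in>UNIV. Y$k$i * Q$i$j * Z$k$j)"
    unfolding inner_vec_def matrix_matrix_mult_def by (simp add: sum_distrib_right)
  also have "\<dots> = (\<Sum>k\<in>UNIV. \<Sum>i\<in>UNIV. \<Sum>j\<in>UNIV. Y$k$i * Q$i$j * Z$k$j)"
    by (subst (2) sum.swap) (rule refl)
  also have "\<dots> = Y \<bullet> (Z ** transpose Q)"
    unfolding inner_vec_def matrix_matrix_mult_def transpose_def
    by (simp add: sum_distrib_left mult_ac)
  finally show ?thesis .
qed

lemma trace_transpose_mult:
  fixes Y Z :: "real^'p^'m"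
  shows "trace (transpose Y ** Z) = Y \<bullet> Z"
  unfolding inner_vec_def matrix_matrix_mult_def transpose_def trace_def
  by simp (rule sum.swap)

lemma bilinear_orthonormal_independent:
  fixes v :: "nat \<Rightarrow> 'a::euclidean_space" and \<beta> :: "'a \<Rightarrow> 'a \<Rightarrow> real"
  assumes bil: "bilinear \<beta>" and "finite I"
    and orth: "\<And>k l. k \<in> I \<Longrightarrow> l \<in> I \<Longrightarrow> \<beta> (v k) (v l) = (if k = l then 1 else 0)"
  shows "inj_on v I" "independent (v ` I)"
proof -
  show inj: "inj_on v I"
  proof (rule inj_onI)
    fix k l assume "k \<in> I" "l \<in> I" "v k = v l"
    then show "k = l"
      using orth[of k k] orth[of k l] by (simp split: if_splits)
  qed
  have "c (v k) = 0" if c: "(\<Sum>x\<in>v ` I. c x *\<^sub>R x) = 0" and k: "k \<in> I" for c k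
  proof -
    have lin: "linear (\<lambda>x. \<beta> x (v k))"
      using bil unfolding bilinear_def by blast
    have "0 = \<beta> (\<Sum>x\<in>v ` I. c x *\<^sub>R x) (v k)"
      using c bilinear_lzero[OF bil] by simp
    also have "\<dots> = (\<Sum>l\<in>I. c (v l) * \<beta> (v l) (v k))"
      by (simp add: linear_sum[OF lin] bilinear_lmul[OF bil] sum.reindex[OF inj])
    also have "\<dots> = (\<Sum>l\<in>I. if l = k then c (v l) else 0)"
      by (rule sum.cong) (simp_all add: orth k)
    finally show ?thesis
      using \<open>finite I\<close> k by simp
  qed
  then show "independent (v ` I)"
    unfolding independent_explicit using \<open>finite I\<close> by blast
qed

lemma bilinear_orthonormal_expansion:
  fixes v :: "nat \<Rightarrow> 'a::euclidean_space" and \<beta> :: "'a \<Rightarrow> 'a \<Rightarrow> real"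
  assumes bil: "bilinear \<beta>"
    and orth: "\<And>k l. k < DIM('a) \<Longrightarrow> l < DIM('a) \<Longrightarrow> \<beta> (v k) (v l) = (if k = l then 1 else 0)"
  shows "\<beta> x y = (\<Sum>k<DIM('a). \<beta> x (v k) * \<beta> (v k) y)"
proof -
  have inj: "inj_on v {..<DIM('a)}" and indep: "independent (v ` {..<DIM('a)})"
    using bilinear_orthonormal_independent[OF bil, of "{..<DIM('a)}" v] orth by auto
  have "dim (UNIV :: 'a set) \<le> card (v ` {..<DIM('a)})"
    using card_image[OF inj] by simp
  then have span: "y \<in> span (v ` {..<DIM('a)})"
    using card_ge_dim_independent[OF subset_UNIV indep] by auto
  define r where "r = x - (\<Sum>k<DIM('a). \<beta> x (v k) *\<^sub>R v k)"
  have r: "\<beta> r z = \<beta> x z - (\<Sum>k<DIM('a). \<beta> x (v k) * \<beta> (v k) z)" for z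
  proof -
    have lin: "linear (\<lambda>w. \<beta> w z)"
      using bil unfolding bilinear_def by blast
    show ?thesis
      unfolding r_def by (simp add: bilinear_lsub[OF bil] linear_sum[OF lin] bilinear_lmul[OF bil])
  qed
  have "\<beta> r (v l) = 0" if "l < DIM('a)" for l
  proof -
    have "(\<Sum>k<DIM('a). \<beta> x (v k) * \<beta> (v k) (v l)) = (\<Sum>k<DIM('a). if k = l then \<beta> x (v l) else 0)"
      by (rule sum.cong) (simp_all add: orth that)
    then show ?thesis
      using that by (simp add: r)
  qed
  then have "\<beta> r y = 0"
    using linear_eq_0_on_span[of "\<beta> r", OF _ _ span] bil unfolding bilinear_def by blast
  then show ?thesis
    by (simp add: r)
qed

lemma MMD2_eq_inner:
  "MMD2 Mn Scol Srow C = (C - Mn) \<bullet> (matrix_inv Scol ** (C - Mn) ** matrix_inv Srow)"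
proof -
  let ?B = "C - Mn"
  have "MMD2 Mn Scol Srow C = trace (matrix_inv Srow ** (transpose ?B ** matrix_inv Scol ** ?B))"
    unfolding MMD2_def by (simp add: matrix_mul_assoc)
  also have "\<dots> = trace (transpose ?B ** (matrix_inv Scol ** ?B ** matrix_inv Srow))"
    by (subst trace_mul_sym) (simp add: matrix_mul_assoc)
  also have "\<dots> = ?B \<bullet> (matrix_inv Scol ** ?B ** matrix_inv Srow)"
    by (rule trace_transpose_mult)
  finally show ?thesis .
qed

section \<open>Coordinates with respect to an L2-independent family\<close>

lemma span_image_inj_sum:
  fixes g :: "nat \<Rightarrow> 'a::real_vector"
  assumes "inj_on g {..<q}" "span (g ` {..<q}) = UNIV"
  shows "\<exists>w. v = (\<Sum>l<q. w l *\<^sub>R g l)"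
proof -
  have "range (\<lambda>u. \<Sum>x\<in>g ` {..<q}. u x *\<^sub>R x) = UNIV"
    using assms(2) by (subst span_finite[symmetric]) simp_all
  then have "v \<in> range (\<lambda>u. \<Sum>x\<in>g ` {..<q}. u x *\<^sub>R x)"
    by simp
  then obtain u where "v = (\<Sum>x\<in>g ` {..<q}. u x *\<^sub>R x)"
    by blast
  then have "v = (\<Sum>l<q. u (g l) *\<^sub>R g l)"
    by (simp add: sum.reindex[OF assms(1)])
  then show ?thesis
    by (intro exI[of _ "\<lambda>l. u (g l)"])
qed

lemma finite_spanning_points:
  fixes f :: "real \<Rightarrow> 'a::euclidean_space"
  assumes "span (f ` T) = UNIV"
  obtains q :: nat and t :: "nat \<Rightarrow> real" where "\<forall>l<q. t l \<in> T" "\<forall>l l'. l < l' \<and> l' < q \<longrightarrow> t l < t l'"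
    "\<forall>v. \<exists>w. v = (\<Sum>l<q. w l *\<^sub>R f (t l))"
proof -
  obtain B where B: "B \<subseteq> f ` T" "independent B" "f ` T \<subseteq> span B"
    by (rule maximal_independent_subset)
  obtain S where S: "S \<subseteq> T" "inj_on f S" "B = f ` S"
    using subset_image_inj[THEN iffD1, OF B(1)] by blast
  have "finite S"
    using finiteI_independent[OF B(2)] by (simp add: S(3) finite_image_iff[OF S(2)])
  define xs where "xs = sorted_list_of_set S"
  define q where "q = length xs"
  define t where "t l = xs ! l" for l
  have xs: "sorted_wrt (<) xs" "distinct xs" "set xs = S"
    using \<open>finite S\<close> unfolding xs_def by auto
  have t_img: "t ` {..<q} = S"
    unfolding t_def q_def using xs(3) by (auto simp: set_conv_nth)
  have "inj_on t {..<q}"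
    unfolding t_def q_def using xs(2) by (simp add: inj_on_def nth_eq_iff_index_eq)
  then have "inj_on (f \<circ> t) {..<q}"
    using S(2) t_img by (intro comp_inj_on) auto
  then have inj: "inj_on (\<lambda>l. f (t l)) {..<q}"
    by (simp add: comp_def)
  have img: "(\<lambda>l. f (t l)) ` {..<q} = B"
    using S(3) t_img by (simp add: image_image[symmetric, of f t])
  have "span ((\<lambda>l. f (t l)) ` {..<q}) = UNIV"
    unfolding img using assms span_minimal[OF B(3) subspace_span] by auto
  then have w: "\<exists>w. v = (\<Sum>l<q. w l *\<^sub>R f (t l))" for v
    by (rule span_image_inj_sum[OF inj])
  show thesis
  proof (rule that)
    show "\<forall>l<q. t l \<in> T"
      using S(1) t_img by auto
    show "\<forall>l l'. l < l' \<and> l' < q \<longrightarrow> t l < t l'"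
      using xs(1) unfolding t_def q_def by (auto intro: sorted_wrt_nth_less)
    show "\<forall>v. \<exists>w. v = (\<Sum>l<q. w l *\<^sub>R f (t l))"
      using w by blast
  qed
qed

lemma sq_int_iff_square_integrable:
  "sq_int T f \<longleftrightarrow> square_integrable lborel (\<lambda>t. indicator T t * f t)"
proof -
  have "(indicator T t * f t)\<^sup>2 = indicator T t * (f t)\<^sup>2" for t
    by (simp add: indicator_def)
  then show ?thesis
    unfolding sq_int_def square_integrable_def set_borel_measurable_def set_integrable_def
    by simp
qed

lemma L2H_iff_square_integrable:
  "L2H T x \<longleftrightarrow> (\<forall>j. square_integrable lborel (\<lambda>t. indicator T t * x t $ j))"
  unfolding L2H_def sq_int_iff_square_integrable ..

lemma set_integral_mult_indicator:
  fixes f g :: "real \<Rightarrow> real"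
  shows "(LINT t:T|lborel. f t * g t) = (\<integral>t. (indicator T t * f t) * (indicator T t * g t) \<partial>lborel)"
  unfolding set_lebesgue_integral_def
  by (rule Bochner_Integration.integral_cong) (auto simp: indicator_def)

lemma Hip_eq_integral:
  "Hip T x y = (\<Sum>j\<in>UNIV. \<integral>t. (indicator T t * x t $ j) * (indicator T t * y t $ j) \<partial>lborel)"
  unfolding Hip_def by (simp add: set_integral_mult_indicator)

lemma Hip_cong: "(\<And>t. t \<in> T \<Longrightarrow> x t = x' t) \<Longrightarrow> Hip T x y = Hip T x' y"
  unfolding Hip_def set_lebesgue_integral_def
  by (intro sum.cong refl Bochner_Integration.integral_cong) (auto simp: indicator_def)

lemma integral_indicator_cong_AE:
  fixes x x' :: "real \<Rightarrow> real^'q"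
  assumes "square_integrable lborel (\<lambda>t. indicator T t * x t $ j)"
    and "square_integrable lborel (\<lambda>t. indicator T t * x' t $ j)"
    and "square_integrable lborel g"
    and "AE t in lborel. t \<in> T \<longrightarrow> x t = x' t"
  shows "(\<integral>t. (indicator T t * x t $ j) * g t \<partial>lborel) = (\<integral>t. (indicator T t * x' t $ j) * g t \<partial>lborel)"
proof (rule Bochner_Integration.integral_cong_AE)
  show "(\<lambda>t. indicator T t * x t $ j * g t) \<in> borel_measurable lborel"
    using integrable_mult_square_integrable[OF assms(1,3)] by (rule borel_measurable_integrable)
  show "(\<lambda>t. indicator T t * x' t $ j * g t) \<in> borel_measurable lborel"
    using integrable_mult_square_integrable[OF assms(2,3)] by (rule borel_measurable_integrable)
  show "AE t in lborel. indicator T t * x t $ j * g t = indicator T t * x' t $ j * g t"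
    using assms(4) by eventually_elim (simp add: indicator_def)
qed

lemma Hip_cong_AE:
  assumes "L2H T x" "L2H T x'" "L2H T y" "AE t in lborel. t \<in> T \<longrightarrow> x t = x' t"
  shows "Hip T x y = Hip T x' y"
  using assms unfolding Hip_eq_integral L2H_iff_square_integrable
  by (intro sum.cong refl integral_indicator_cong_AE) auto

locale L2_independent_family =
  fixes T :: "real set" and \<phi> :: "real \<Rightarrow> real^'m::finite"
  assumes sq_int_phi: "\<forall>k. sq_int T (\<lambda>t. \<phi> t $ k)"
    and lin_indep_phi: "L2_lin_indep T \<phi>"
begin

definition phi_comb :: "real^'p^'m \<Rightarrow> real \<Rightarrow> real^'p" where
  "phi_comb V t = transpose V *v \<phi> t"

definition phi_coef :: "(real \<Rightarrow> real^'p) \<Rightarrow> real^'p^'m" where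
  "phi_coef x = (\<chi> k j. LINT t:T|lborel. \<phi> t $ k * x t $ j)"

definition phi_gram :: "real^'m^'m" where
  "phi_gram = (\<chi> k k'. LINT t:T|lborel. \<phi> t $ k * \<phi> t $ k')"

lemma span_phi: "span (\<phi> ` T) = UNIV"
proof (rule ccontr)
  assume "span (\<phi> ` T) \<noteq> UNIV"
  then have "dim (\<phi> ` T) < DIM(real^'m)"
    using dim_subset_UNIV[of "\<phi> ` T"] dim_eq_full[of "\<phi> ` T"] by linarith
  then obtain c :: "real^'m" where c: "c \<noteq> 0" "\<And>y. y \<in> span (\<phi> ` T) \<Longrightarrow> orthogonal c y"
    using orthogonal_to_subspace_exists by metis
  then have "\<forall>t\<in>T. c \<bullet> \<phi> t = 0"
    using span_base unfolding orthogonal_def by blast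
  then have "c = 0"
    using lin_indep_phi unfolding L2_lin_indep_def by auto
  then show False
    using c(1) by simp
qed

lemma sampling_design_exists:
  obtains q :: nat and tp :: "nat \<Rightarrow> real" and W :: "'m \<Rightarrow> nat \<Rightarrow> real"
  where "\<forall>l<q. tp l \<in> T" "\<forall>l l'. l < l' \<and> l' < q \<longrightarrow> tp l < tp l'"
    "\<forall>k. (\<Sum>l<q. W k l *\<^sub>R \<phi> (tp l)) = axis k 1"
proof -
  obtain q :: nat and tp :: "nat \<Rightarrow> real" where tp: "\<forall>l<q. tp l \<in> T"
    "\<forall>l l'. l < l' \<and> l' < q \<longrightarrow> tp l < tp l'" and spans: "\<forall>v. \<exists>w. v = (\<Sum>l<q. w l *\<^sub>R \<phi> (tp l))"
    by (rule finite_spanning_points[OF span_phi])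
  have "\<forall>k. \<exists>w. (\<Sum>l<q. w l *\<^sub>R \<phi> (tp l)) = axis k 1"
    using spans by (metis (no_types))
  then obtain W where "\<forall>k. (\<Sum>l<q. W k l *\<^sub>R \<phi> (tp l)) = axis k 1"
    unfolding choice_iff by blast
  with tp that show thesis
    by blast
qed

lemma square_integrable_phi: "square_integrable lborel (\<lambda>t. indicator T t * \<phi> t $ k)"
  using sq_int_phi by (simp add: sq_int_iff_square_integrable)

lemma phi_comb_nth: "phi_comb V t $ j = (\<Sum>k\<in>UNIV. V $ k $ j * \<phi> t $ k)"
  unfolding phi_comb_def by (simp add: matrix_vector_mult_def transpose_def)

lemma indicator_phi_comb_nth:
  "indicator T t * phi_comb V t $ j = (\<Sum>k\<in>UNIV. V $ k $ j * (indicator T t * \<phi> t $ k))"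
  by (simp add: phi_comb_nth sum_distrib_left mult.left_commute)

lemma L2H_phi_comb: "L2H T (phi_comb V)"
  unfolding L2H_iff_square_integrable indicator_phi_comb_nth
  by (auto intro: square_integrable_lincomb square_integrable_phi)

lemma phi_coef_nth:
  "phi_coef x $ k $ j = (\<integral>t. (indicator T t * \<phi> t $ k) * (indicator T t * x t $ j) \<partial>lborel)"
  unfolding phi_coef_def by (simp add: set_integral_mult_indicator)

lemma phi_gram_nth:
  "phi_gram $ k $ k' = (\<integral>t. (indicator T t * \<phi> t $ k) * (indicator T t * \<phi> t $ k') \<partial>lborel)"
  unfolding phi_gram_def by (simp add: set_integral_mult_indicator)

lemma Hip_phi_comb:
  assumes "L2H T x"
  shows "Hip T (phi_comb V) x = V \<bullet> phi_coef x"
proof -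
  have "Hip T (phi_comb V) x = (\<Sum>j\<in>UNIV. \<Sum>k\<in>UNIV. V $ k $ j * phi_coef x $ k $ j)"
    using assms unfolding Hip_eq_integral indicator_phi_comb_nth L2H_iff_square_integrable
    by (intro sum.cong refl, subst integral_lincomb_mult) (auto intro: square_integrable_phi simp: phi_coef_nth)
  also have "\<dots> = V \<bullet> phi_coef x"
    unfolding inner_vec_def inner_real_def by (rule sum.swap)
  finally show ?thesis .
qed

lemma phi_coef_phi_comb: "phi_coef (phi_comb V) = phi_gram ** V"
proof -
  have "phi_coef (phi_comb V) $ k $ j = (\<Sum>k'\<in>UNIV. phi_gram $ k $ k' * V $ k' $ j)" for k j
  proof -
    have "phi_coef (phi_comb V) $ k $ j
        = (\<integral>t. (\<Sum>k'\<in>UNIV. V $ k' $ j * (indicator T t * \<phi> t $ k')) * (indicator T t * \<phi> t $ k) \<partial>lborel)"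
      unfolding phi_coef_nth indicator_phi_comb_nth by (simp add: mult.commute)
    also have "\<dots> = (\<Sum>k'\<in>UNIV. V $ k' $ j * phi_gram $ k' $ k)"
      by (simp add: integral_lincomb_mult square_integrable_phi phi_gram_nth)
    finally show ?thesis
      by (simp add: phi_gram_def mult.commute)
  qed
  then show ?thesis
    by (simp add: vec_eq_iff matrix_matrix_mult_def)
qed

lemma phi_coef_cong_AE:
  assumes "L2H T x" "L2H T x'" "AE t in lborel. t \<in> T \<longrightarrow> x t = x' t"
  shows "phi_coef x = phi_coef x'"
proof -
  have "phi_coef x $ k $ j = phi_coef x' $ k $ j" for k j
  proof -
    have "(\<integral>t. (indicator T t * x t $ j) * (indicator T t * \<phi> t $ k) \<partial>lborel)
        = (\<integral>t. (indicator T t * x' t $ j) * (indicator T t * \<phi> t $ k) \<partial>lborel)"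
      using assms square_integrable_phi unfolding L2H_iff_square_integrable
      by (intro integral_indicator_cong_AE) auto
    then show ?thesis
      unfolding phi_coef_nth by (simp add: mult.commute)
  qed
  then show ?thesis
    by (simp add: vec_eq_iff)
qed

lemma phi_comb_eq_0_AE:
  assumes "AE t in lborel. t \<in> T \<longrightarrow> phi_comb V t = 0"
  shows "V = 0"
proof -
  have "V $ k $ j = 0" for k j
  proof -
    have "AE t in lborel. t \<in> T \<longrightarrow> (\<chi> k. V $ k $ j) \<bullet> \<phi> t = 0"
      using assms by eventually_elim (auto simp: phi_comb_nth inner_vec_def vec_eq_iff)
    then have "(\<chi> k. V $ k $ j) = 0"
      using lin_indep_phi unfolding L2_lin_indep_def by blast
    then show ?thesis
      by (metis vec_lambda_beta zero_index)
  qed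
  then show ?thesis
    by (simp add: vec_eq_iff)
qed

lemma phi_gram_posdef: "sym_posdef phi_gram"
  unfolding sym_posdef_def
proof (intro conjI allI impI)
  show "transpose phi_gram = phi_gram"
    by (simp add: phi_gram_def transpose_def vec_eq_iff mult.commute)
  fix v :: "real^'m"
  assume "v \<noteq> 0"
  define f where "f t = (\<Sum>k\<in>UNIV. v $ k * (indicator T t * \<phi> t $ k))" for t
  have f: "square_integrable lborel f"
    unfolding f_def by (auto intro: square_integrable_lincomb square_integrable_phi)
  have eq: "v \<bullet> (phi_gram *v v) = (\<integral>t. f t * f t \<partial>lborel)"
  proof -
    have "v \<bullet> (phi_gram *v v) = (\<Sum>k\<in>UNIV. \<Sum>k'\<in>UNIV. v $ k * v $ k' * phi_gram $ k $ k')"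
      by (simp add: inner_vec_def matrix_vector_mult_def sum_distrib_left mult_ac)
    then show ?thesis
      unfolding phi_gram_nth f_def
      by (simp add: integral_lincomb_mult_lincomb square_integrable_phi)
  qed
  have "(\<integral>t. f t * f t \<partial>lborel) \<noteq> 0"
  proof
    assume "(\<integral>t. f t * f t \<partial>lborel) = 0"
    then have "AE t in lborel. f t * f t = 0"
      using integral_nonneg_eq_0_iff_AE[of lborel "\<lambda>t. f t * f t"]
        integrable_mult_square_integrable[OF f f] by simp
    then have "AE t in lborel. t \<in> T \<longrightarrow> v \<bullet> \<phi> t = 0"
      by eventually_elim (auto simp: f_def inner_vec_def indicator_def)
    then show False
      using lin_indep_phi \<open>v \<noteq> 0\<close> unfolding L2_lin_indep_def by blast
  qed
  moreover have "0 \<le> (\<integral>t. f t * f t \<partial>lborel)"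
    by (rule Bochner_Integration.integral_nonneg) simp
  ultimately show "0 < v \<bullet> (phi_gram *v v)"
    unfolding eq by linarith
qed

lemma phi_comb_scaleR: "phi_comb (c *\<^sub>R V) t = c *\<^sub>R phi_comb V t"
  by (simp add: vec_eq_iff phi_comb_nth sum_distrib_left mult.assoc)

definition phi_inner :: "real^'p^'m \<Rightarrow> real^'p^'m \<Rightarrow> real" where
  "phi_inner U Z = U \<bullet> (phi_gram ** Z)"

lemma bilinear_phi_inner: "bilinear phi_inner"
  unfolding bilinear_def linear_iff phi_inner_def
  by (simp add: inner_add_left inner_add_right matrix_add_ldistrib
      matrix_scalar_ac scalar_matrix_assoc[symmetric])

lemma phi_inner_commute: "phi_inner U Z = phi_inner Z U"
proof -
  have "transpose phi_gram = phi_gram"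
    using phi_gram_posdef unfolding sym_posdef_def by blast
  then show ?thesis
    unfolding phi_inner_def using inner_matrix_mult_left[of phi_gram Z U] by (simp add: inner_commute)
qed

end

section \<open>Integral operators with separable kernel of finite rank\<close>

lemma integrable_vec_componentwise:
  fixes F :: "'a \<Rightarrow> real^'n"
  assumes "\<And>i. integrable N (\<lambda>x. F x $ i)"
  shows "integrable N F" "integral\<^sup>L N F $ i = (\<integral>x. F x $ i \<partial>N)"
proof -
  have "(\<Sum>i\<in>UNIV. F x $ i *\<^sub>R axis i 1) = F x" for x
    using basis_expansion[of "F x"] by (simp add: scalar_mult_eq_scaleR)
  then have F: "F = (\<lambda>x. \<Sum>i\<in>UNIV. F x $ i *\<^sub>R axis i 1)"
    by simp
  show int: "integrable N F"
    by (subst F) (intro Bochner_Integration.integrable_sum integrable_scaleR_left assms)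
  show "integral\<^sup>L N F $ i = (\<integral>x. F x $ i \<partial>N)"
    using int by (simp add: cart_eq_inner_axis)
qed

lemma Cop_nth:
  assumes "\<And>i. integrable lborel (\<lambda>t. indicator T t * (K s t *v x t) $ i)"
  shows "Cop T K x s $ i = (\<integral>t. indicator T t * (K s t *v x t) $ i \<partial>lborel)"
  using integrable_vec_componentwise[of lborel "\<lambda>t. indicator T t *\<^sub>R (K s t *v x t)"] assms
  unfolding Cop_def set_lebesgue_integral_def by simp

locale phi_separable_kernel = L2_independent_family T \<phi>
  for T :: "real set" and \<phi> :: "real \<Rightarrow> real^'m::finite" +
  fixes S :: "real^'m^'m" and R :: "real^'p::finite^'p" and K :: "real \<Rightarrow> real \<Rightarrow> real^'p^'p"
  assumes S_posdef: "sym_posdef S" and R_posdef: "sym_posdef R"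
    and kernel_eq: "\<forall>s\<in>T. \<forall>t\<in>T. K s t = (\<phi> s \<bullet> (S *v \<phi> t)) *\<^sub>R R"
begin

lemma indicator_kernel_nth:
  assumes "s \<in> T"
  shows "indicator T t * (K s t *v x t) $ i =
    (\<Sum>k\<in>UNIV. (\<phi> s v* S) $ k * (indicator T t * \<phi> t $ k)) * (\<Sum>j\<in>UNIV. R $ i $ j * (indicator T t * x t $ j))"
proof (cases "t \<in> T")
  case True
  then have "K s t *v x t = ((\<phi> s v* S) \<bullet> \<phi> t) *\<^sub>R (R *v x t)"
    using assms kernel_eq by (simp add: dot_lmul_matrix scaleR_matrix_vector_assoc)
  then show ?thesis
    using True by (simp add: inner_vec_def matrix_vector_mult_def)
qed simp

lemma Cop_phi_comb:
  assumes x: "L2H T x" and s: "s \<in> T"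
  shows "Cop T K x s = phi_comb (S ** phi_coef x ** R) s"
proof -
  have sq_x: "square_integrable lborel (\<lambda>t. indicator T t * x t $ j)" for j
    using x unfolding L2H_iff_square_integrable by blast
  have "Cop T K x s $ i = phi_comb (S ** phi_coef x ** R) s $ i" for i
  proof -
    have "Cop T K x s $ i = (\<Sum>k\<in>UNIV. \<Sum>j\<in>UNIV. (\<phi> s v* S) $ k * R $ i $ j * phi_coef x $ k $ j)"
      unfolding indicator_kernel_nth[OF s]
      by (subst Cop_nth) (auto simp: indicator_kernel_nth[OF s] integral_lincomb_mult_lincomb
          phi_coef_nth square_integrable_phi sq_x intro!: integrable_mult_square_integrable
          square_integrable_lincomb)
    also have "\<dots> = (\<Sum>j\<in>UNIV. \<Sum>k\<in>UNIV. (\<phi> s v* S) $ k * phi_coef x $ k $ j * R $ j $ i)"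
      using sym_posdef_entry_sym[OF R_posdef] by (subst sum.swap) (simp add: mult_ac)
    also have "\<dots> = ((\<phi> s v* S) v* phi_coef x v* R) $ i"
      by (simp add: vector_matrix_mult_def sum_distrib_right)
    also have "\<dots> = phi_comb (S ** phi_coef x ** R) s $ i"
      by (simp add: phi_comb_def vector_matrix_mul_assoc)
    finally show ?thesis .
  qed
  then show ?thesis
    by (simp add: vec_eq_iff)
qed

end

locale phi_kernel_eigensystem = phi_separable_kernel T \<phi> S R K
  for T :: "real set" and \<phi> :: "real \<Rightarrow> real^'m::finite" and S :: "real^'m^'m"
    and R :: "real^'p::finite^'p" and K :: "real \<Rightarrow> real \<Rightarrow> real^'p^'p" +
  fixes \<psi> :: "nat \<Rightarrow> real \<Rightarrow> real^'p" and \<pi> :: "nat \<Rightarrow> real"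
  assumes eigsys: "eigsys T K \<psi> \<pi>"
begin

lemma L2H_eigenfunction: "L2H T (\<psi> k)"
  using eigsys unfolding eigsys_def by blast

lemma Hip_eigenfunctions: "Hip T (\<psi> k) (\<psi> l) = (if k = l then 1 else 0)"
  using eigsys unfolding eigsys_def by blast

lemma eigenvalue_antimono: "k \<le> l \<Longrightarrow> \<pi> l \<le> \<pi> k"
  using eigsys unfolding eigsys_def by blast

lemma eigen_equation_phi_coef:
  "AE s in lborel. s \<in> T \<longrightarrow> phi_comb (S ** phi_coef (\<psi> k) ** R) s = \<pi> k *\<^sub>R \<psi> k s"
proof -
  have "AE s in lborel. s \<in> T \<longrightarrow> Cop T K (\<psi> k) s = \<pi> k *\<^sub>R \<psi> k s"
    using eigsys unfolding eigsys_def by blast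
  then show ?thesis
    by eventually_elim (simp add: Cop_phi_comb L2H_eigenfunction)
qed

definition eigencoef :: "nat \<Rightarrow> real^'p^'m" where
  "eigencoef k = (1 / \<pi> k) *\<^sub>R (S ** phi_coef (\<psi> k) ** R)"

lemma eigenfunction_eq_phi_comb:
  assumes "\<pi> k \<noteq> 0"
  shows "AE s in lborel. s \<in> T \<longrightarrow> \<psi> k s = phi_comb (eigencoef k) s"
  using eigen_equation_phi_coef[of k]
  by eventually_elim (use assms in \<open>auto simp: eigencoef_def phi_comb_scaleR\<close>)

lemma phi_coef_eigenfunction:
  assumes "\<pi> k \<noteq> 0"
  shows "phi_coef (\<psi> k) = phi_gram ** eigencoef k"
  using phi_coef_cong_AE[OF L2H_eigenfunction L2H_phi_comb eigenfunction_eq_phi_comb[OF assms]]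
  by (simp add: phi_coef_phi_comb)

lemma eigencoef_eigen:
  assumes "\<pi> k \<noteq> 0"
  shows "S ** (phi_gram ** eigencoef k) ** R = \<pi> k *\<^sub>R eigencoef k"
  using assms by (simp add: phi_coef_eigenfunction[OF assms, symmetric]) (simp add: eigencoef_def)

lemma phi_inner_eigencoef:
  assumes "\<pi> k \<noteq> 0" "\<pi> l \<noteq> 0"
  shows "phi_inner (eigencoef k) (eigencoef l) = (if k = l then 1 else 0)"
proof -
  have "Hip T (\<psi> k) (\<psi> l) = Hip T (phi_comb (eigencoef k)) (\<psi> l)"
    by (rule Hip_cong_AE[OF L2H_eigenfunction L2H_phi_comb L2H_eigenfunction
          eigenfunction_eq_phi_comb[OF assms(1)]])
  also have "\<dots> = phi_inner (eigencoef k) (eigencoef l)"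
    by (simp add: Hip_phi_comb L2H_eigenfunction phi_coef_eigenfunction[OF assms(2)] phi_inner_def)
  finally show ?thesis
    by (simp add: Hip_eigenfunctions)
qed

lemma phi_coef_eigenfunction_eq_0:
  assumes "\<pi> k = 0"
  shows "phi_coef (\<psi> k) = 0"
proof -
  have "AE s in lborel. s \<in> T \<longrightarrow> phi_comb (S ** phi_coef (\<psi> k) ** R) s = 0"
    using eigen_equation_phi_coef[of k] assms by simp
  then have "S ** phi_coef (\<psi> k) ** R = 0"
    by (rule phi_comb_eq_0_AE)
  then show ?thesis
    by (rule invertible_cancel[OF sym_posdef_invertible[OF S_posdef] sym_posdef_invertible[OF R_posdef]])
qed

text \<open>Eigenfunctions with nonzero eigenvalue are orthonormal elements of the range of the
  operator, which has dimension CARD('m) * CARD('p); as the eigenvalues are nonincreasing,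
  a single negative one would produce infinitely many of them.\<close>
lemma eigenvalue_nonneg: "0 \<le> \<pi> k"
proof (rule ccontr)
  define I where "I = {k..k + DIM(real^'p^'m)}"
  assume "\<not> 0 \<le> \<pi> k"
  then have "\<pi> l \<noteq> 0" if "l \<in> I" for l
    using eigenvalue_antimono[of k l] that unfolding I_def by force
  then have "inj_on eigencoef I" "independent (eigencoef ` I)"
    using bilinear_orthonormal_independent[OF bilinear_phi_inner, of I eigencoef] phi_inner_eigencoef
    unfolding I_def by auto
  then have "card I \<le> DIM(real^'p^'m)"
    using independent_card_le[of "eigencoef ` I"] by (simp add: card_image)
  then show False
    unfolding I_def by simp
qed

lemma eigenvalue_pos:
  assumes "k < DIM(real^'p^'m)"
  shows "0 < \<pi> k"
proof (rule ccontr)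
  assume "\<not> 0 < \<pi> k"
  then have coef_0: "phi_coef (\<psi> l) = 0" if "k \<le> l" for l
  proof -
    have "\<pi> l = 0"
      using eigenvalue_antimono[OF that] eigenvalue_nonneg[of l] \<open>\<not> 0 < \<pi> k\<close> by linarith
    then show ?thesis
      by (rule phi_coef_eigenfunction_eq_0)
  qed
  have "dim (phi_coef ` \<psi> ` {..<k}) \<le> card (phi_coef ` \<psi> ` {..<k})"
    by (rule dim_le_card') simp
  also have "\<dots> \<le> k"
    using card_image_le[of "{..<k}" "\<lambda>l. phi_coef (\<psi> l)"] by (simp add: image_image)
  finally have "dim (phi_coef ` \<psi> ` {..<k}) < DIM(real^'p^'m)"
    using assms by linarith
  then obtain U :: "real^'p^'m" where U: "U \<noteq> 0" "\<And>y. y \<in> span (phi_coef ` \<psi> ` {..<k}) \<Longrightarrow> orthogonal U y"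
    using orthogonal_to_subspace_exists by metis
  have "Hip T (phi_comb U) (\<psi> l) = 0" for l
  proof (cases "l < k")
    case True
    then have "orthogonal U (phi_coef (\<psi> l))"
      by (intro U(2) span_base) auto
    then show ?thesis
      by (simp add: Hip_phi_comb L2H_eigenfunction orthogonal_def)
  qed (simp add: Hip_phi_comb L2H_eigenfunction coef_0)
  then have "AE s in lborel. s \<in> T \<longrightarrow> Cop T K (phi_comb U) s = 0"
    using eigsys L2H_phi_comb unfolding eigsys_def by blast
  then have "AE s in lborel. s \<in> T \<longrightarrow> phi_comb (S ** phi_gram ** U ** R) s = 0"
    by eventually_elim (simp add: Cop_phi_comb L2H_phi_comb phi_coef_phi_comb matrix_mul_assoc)
  then have "(S ** phi_gram) ** U ** R = 0"
    by (rule phi_comb_eq_0_AE)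
  moreover have "invertible (S ** phi_gram)"
    by (intro invertible_mult sym_posdef_invertible S_posdef phi_gram_posdef)
  ultimately have "U = 0"
    using invertible_cancel sym_posdef_invertible[OF R_posdef] by blast
  then show False
    using U(1) by simp
qed

lemma phi_inner_expansion:
  "phi_inner U Z = (\<Sum>k<DIM(real^'p^'m). phi_inner U (eigencoef k) * phi_inner (eigencoef k) Z)"
proof (rule bilinear_orthonormal_expansion[OF bilinear_phi_inner])
  fix k l
  assume "k < DIM(real^'p^'m)" "l < DIM(real^'p^'m)"
  then show "phi_inner (eigencoef k) (eigencoef l) = (if k = l then 1 else 0)"
    using eigenvalue_pos[of k] eigenvalue_pos[of l] by (simp add: phi_inner_eigencoef)
qed

lemma Hip_phi_comb_eigenfunction:
  assumes "k < DIM(real^'p^'m)"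
  shows "Hip T (phi_comb B) (\<psi> k) = phi_inner B (eigencoef k)"
  using eigenvalue_pos[OF assms]
  by (simp add: Hip_phi_comb L2H_eigenfunction phi_coef_eigenfunction phi_inner_def)

text \<open>On the range of the operator the weighted eigen-expansion is the quadratic form of the
  inverse operator, which in coefficients is B \<mapsto> inv(phi_gram) inv(S) B inv(R).\<close>
lemma weighted_eigen_sum_phi_comb:
  "(\<Sum>k<DIM(real^'p^'m). inverse (\<pi> k) * (Hip T (phi_comb B) (\<psi> k))\<^sup>2)
    = B \<bullet> (matrix_inv S ** B ** matrix_inv R)"
proof -
  have invS: "invertible S" and invR: "invertible R" and invG: "invertible phi_gram"
    using S_posdef R_posdef phi_gram_posdef by (simp_all add: sym_posdef_invertible)
  have symS: "transpose S = S" and symR: "transpose R = R" and symG: "transpose phi_gram = phi_gram"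
    using S_posdef R_posdef phi_gram_posdef by (simp_all add: sym_posdef_def)
  define Y where "Y = matrix_inv phi_gram ** (matrix_inv S ** B ** matrix_inv R)"
  have GY: "phi_gram ** Y = matrix_inv S ** B ** matrix_inv R"
    unfolding Y_def matrix_mul_assoc by (simp add: invertible_matrix_inv[OF invG])
  have B: "B = S ** (phi_gram ** Y) ** R"
    unfolding GY matrix_mul_assoc
    by (simp add: invertible_matrix_inv[OF invS])
      (simp add: matrix_mul_assoc[symmetric] invertible_matrix_inv[OF invR])
  have coef: "phi_inner B (eigencoef k) = \<pi> k * phi_inner Y (eigencoef k)" if "k < DIM(real^'p^'m)" for k
  proof -
    have "phi_inner B (eigencoef k) = (S ** (phi_gram ** Y) ** R) \<bullet> (phi_gram ** eigencoef k)"
      unfolding phi_inner_def using B by simp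
    also have "\<dots> = (S ** (phi_gram ** Y)) \<bullet> ((phi_gram ** eigencoef k) ** transpose R)"
      by (rule inner_matrix_mult_right)
    also have "\<dots> = (phi_gram ** Y) \<bullet> (transpose S ** ((phi_gram ** eigencoef k) ** transpose R))"
      by (rule inner_matrix_mult_left)
    also have "transpose S ** ((phi_gram ** eigencoef k) ** transpose R) = S ** (phi_gram ** eigencoef k) ** R"
      by (simp add: symS symR matrix_mul_assoc)
    also have "\<dots> = \<pi> k *\<^sub>R eigencoef k"
      using eigenvalue_pos[OF that] by (simp add: eigencoef_eigen)
    also have "(phi_gram ** Y) \<bullet> (\<pi> k *\<^sub>R eigencoef k) = \<pi> k * phi_inner Y (eigencoef k)"
      by (simp add: inner_matrix_mult_left symG phi_inner_def)
    finally show ?thesis .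
  qed
  have "inverse (\<pi> k) * (Hip T (phi_comb B) (\<psi> k))\<^sup>2 = phi_inner B (eigencoef k) * phi_inner (eigencoef k) Y"
    if "k < DIM(real^'p^'m)" for k
  proof -
    have "inverse (\<pi> k) * (Hip T (phi_comb B) (\<psi> k))\<^sup>2
        = phi_inner B (eigencoef k) * (inverse (\<pi> k) * phi_inner B (eigencoef k))"
      by (simp add: Hip_phi_comb_eigenfunction[OF that] power2_eq_square)
    also have "inverse (\<pi> k) * phi_inner B (eigencoef k) = phi_inner (eigencoef k) Y"
      using eigenvalue_pos[OF that] by (simp add: coef[OF that] phi_inner_commute)
    finally show ?thesis .
  qed
  then have "(\<Sum>k<DIM(real^'p^'m). inverse (\<pi> k) * (Hip T (phi_comb B) (\<psi> k))\<^sup>2)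
      = (\<Sum>k<DIM(real^'p^'m). phi_inner B (eigencoef k) * phi_inner (eigencoef k) Y)"
    by (intro sum.cong) auto
  also have "\<dots> = phi_inner B Y"
    by (rule phi_inner_expansion[symmetric])
  finally show ?thesis
    by (simp add: phi_inner_def GY)
qed

end

lemma Kop_phi_kernel:
  fixes \<phi> :: "real \<Rightarrow> real^'m::finite" and S :: "real^'m^'m"
  assumes phi: "\<forall>k. sq_int T (\<lambda>t. \<phi> t $ k)" and f: "sq_int T f"
    and kernel: "\<forall>s\<in>T. \<forall>t\<in>T. k s t = c * (\<phi> s \<bullet> (S *v \<phi> t))" and s: "s \<in> T"
  shows "Kop T k f s = c * ((\<phi> s v* S) \<bullet> (\<chi> k'. LINT t:T|lborel. \<phi> t $ k' * f t))"
proof -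
  have "Kop T k f s
      = (\<integral>t. (\<Sum>k'\<in>UNIV. (c * (\<phi> s v* S) $ k') * (indicator T t * \<phi> t $ k')) * (indicator T t * f t) \<partial>lborel)"
    unfolding Kop_def set_lebesgue_integral_def
    using kernel[unfolded dot_lmul_matrix[symmetric]] s
    by (intro Bochner_Integration.integral_cong refl)
      (auto simp: inner_vec_def sum_distrib_left sum_distrib_right mult_ac indicator_def)
  also have "\<dots> = (\<Sum>k'\<in>UNIV. (c * (\<phi> s v* S) $ k') * (LINT t:T|lborel. \<phi> t $ k' * f t))"
    using phi f
    by (simp add: integral_lincomb_mult set_integral_mult_indicator sq_int_iff_square_integrable)
  finally show ?thesis
    by (simp add: inner_vec_def sum_distrib_left mult_ac)
qed

text \<open>If S were singular, the images of any CARD('m) functions under the integral operator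
  would lie in the span of the functions s \<mapsto> (\<phi> s v* S) \<bullet> y, y in the proper subspace
  range S, and hence be linearly dependent.\<close>
lemma op_rank_ge_imp_invertible:
  fixes \<phi> :: "real \<Rightarrow> real^'m::finite" and S :: "real^'m^'m"
  assumes phi: "\<forall>k. sq_int T (\<lambda>t. \<phi> t $ k)"
    and kernel: "\<forall>s\<in>T. \<forall>t\<in>T. k s t = c * (\<phi> s \<bullet> (S *v \<phi> t))"
    and rank: "op_rank_ge T k CARD('m)"
  shows "invertible S"
proof (rule ccontr)
  assume singular: "\<not> invertible S"
  obtain f where f: "\<forall>i<CARD('m). sq_int T (f i)"
    and indep: "\<forall>d. (AE s in lborel. s \<in> T \<longrightarrow> (\<Sum>i<CARD('m). d i * Kop T k (f i) s) = 0) \<longrightarrow>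
        (\<forall>i<CARD('m). d i = 0)"
    using rank unfolding op_rank_ge_def by blast
  obtain h :: "nat \<Rightarrow> 'm" where h: "bij_betw h {..<CARD('m)} UNIV"
    using ex_bij_betw_nat_finite[of "UNIV :: 'm set"] by (auto simp: atLeast0LessThan)
  define H :: "real^'m^'m" where
    "H = (\<chi> k' k. LINT t:T|lborel. \<phi> t $ k' * f (inv_into {..<CARD('m)} h k) t)"
  have "\<not> invertible (S ** H)"
  proof
    assume "invertible (S ** H)"
    then obtain B where "S ** (H ** B) = mat 1"
      using invertible_right_inverse matrix_mul_assoc by metis
    then show False
      using singular invertible_right_inverse by blast
  qed
  then obtain v where v: "v \<noteq> 0" "(S ** H) *v v = 0"
    using matrix_left_invertible_ker invertible_left_inverse by blast
  have "(\<Sum>i<CARD('m). v $ h i * Kop T k (f i) s) = 0" if "s \<in> T" for s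
  proof -
    have "(\<Sum>i<CARD('m). v $ h i * Kop T k (f i) s)
        = (\<Sum>i<CARD('m). v $ h i * (c * ((\<phi> s v* S) \<bullet> column (h i) H)))"
      using h f that
      by (intro sum.cong refl)
        (simp add: Kop_phi_kernel[OF phi _ kernel] H_def column_def bij_betw_inv_into_left)
    also have "\<dots> = (\<Sum>k\<in>UNIV. v $ k * (c * ((\<phi> s v* S) \<bullet> column k H)))"
      by (rule sum.reindex_bij_betw[OF h])
    also have "\<dots> = c * ((\<phi> s v* S) \<bullet> (H *v v))"
      by (simp add: matrix_mult_sum scalar_mult_eq_scaleR inner_sum_right sum_distrib_left mult_ac)
    also have "\<dots> = 0"
      using v(2) by (simp add: dot_lmul_matrix matrix_vector_mul_assoc)
    finally show ?thesis .
  qed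
  then have "AE s in lborel. s \<in> T \<longrightarrow> (\<Sum>i<CARD('m). v $ h i * Kop T k (f i) s) = 0"
    by simp
  from indep[rule_format, OF this] have vh: "v $ h i = 0" if "i < CARD('m)" for i
    using that .
  have "v $ k = 0" for k
  proof -
    have "k \<in> h ` {..<CARD('m)}"
      using h by (simp add: bij_betw_def)
    then show ?thesis
      using vh by auto
  qed
  then have "v = 0"
    by (simp add: vec_eq_iff)
  then show False
    using v(1) by simp
qed

section \<open>Gaussian vectors and positive definite kernels\<close>

lemma sum_swap_pairs:
  "(\<Sum>a\<in>A. \<Sum>b\<in>B. \<Sum>c\<in>C. \<Sum>d\<in>D. f a b c d) = (\<Sum>c\<in>C. \<Sum>d\<in>D. \<Sum>a\<in>A. \<Sum>b\<in>B. f a b c d)"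
proof -
  have "(\<Sum>a\<in>A. \<Sum>b\<in>B. \<Sum>c\<in>C. \<Sum>d\<in>D. f a b c d) = (\<Sum>a\<in>A. \<Sum>c\<in>C. \<Sum>b\<in>B. \<Sum>d\<in>D. f a b c d)"
    by (rule sum.cong[OF refl], rule sum.swap)
  also have "\<dots> = (\<Sum>c\<in>C. \<Sum>a\<in>A. \<Sum>d\<in>D. \<Sum>b\<in>B. f a b c d)"
    by (subst sum.swap) (intro sum.cong refl sum.swap)
  also have "\<dots> = (\<Sum>c\<in>C. \<Sum>d\<in>D. \<Sum>a\<in>A. \<Sum>b\<in>B. f a b c d)"
    by (rule sum.cong[OF refl], rule sum.swap)
  finally show ?thesis .
qed

lemma quadratic_form_lincomb:
  fixes c :: "'j \<Rightarrow> real" and L :: "'j \<Rightarrow> 'i \<Rightarrow> real" and C :: "'i \<Rightarrow> 'i \<Rightarrow> real"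
  shows "(\<Sum>i\<in>I. \<Sum>i'\<in>I. (\<Sum>j\<in>J. c j * L j i) * (\<Sum>j'\<in>J. c j' * L j' i') * C i i') =
   (\<Sum>j\<in>J. \<Sum>j'\<in>J. c j * c j' * (\<Sum>i\<in>I. \<Sum>i'\<in>I. L j i * L j' i' * C i i'))"
proof -
  have "(\<Sum>i\<in>I. \<Sum>i'\<in>I. (\<Sum>j\<in>J. c j * L j i) * (\<Sum>j'\<in>J. c j' * L j' i') * C i i') =
      (\<Sum>i\<in>I. \<Sum>i'\<in>I. \<Sum>j\<in>J. \<Sum>j'\<in>J. c j * c j' * (L j i * L j' i' * C i i'))"
    unfolding sum_product sum_distrib_right by (simp add: sum_distrib_left mult_ac)
  also have "\<dots> = (\<Sum>j\<in>J. \<Sum>j'\<in>J. \<Sum>i\<in>I. \<Sum>i'\<in>I. c j * c j' * (L j i * L j' i' * C i i'))"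
    by (rule sum_swap_pairs)
  finally show ?thesis
    by (simp add: sum_distrib_left)
qed

lemma pd_kernel_congruence_psd:
  fixes q :: nat and t :: "nat \<Rightarrow> real" and W :: "'m::finite \<Rightarrow> nat \<Rightarrow> real" and v :: "real^'m"
  assumes "pd_kernel T \<kappa>" "\<forall>l<q. t l \<in> T"
  shows "0 \<le> v \<bullet> ((\<chi> k k'. \<Sum>l<q. \<Sum>l'<q. W k l * W k' l' * \<kappa> (t l) (t l')) *v v)"
proof -
  have "v \<bullet> ((\<chi> k k'. \<Sum>l<q. \<Sum>l'<q. W k l * W k' l' * \<kappa> (t l) (t l')) *v v)
      = (\<Sum>l<q. \<Sum>l'<q. (\<Sum>k\<in>UNIV. v $ k * W k l) * (\<Sum>k'\<in>UNIV. v $ k' * W k' l') * \<kappa> (t l) (t l'))"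
    unfolding quadratic_form_lincomb
    by (simp add: inner_vec_def matrix_vector_mult_def sum_distrib_left mult_ac)
  also have "0 \<le> \<dots>"
  proof -
    have "\<And>c. 0 \<le> (\<Sum>l<q. \<Sum>l'<q. c l * c l' * \<kappa> (t l) (t l'))"
      using assms unfolding pd_kernel_def by blast
    then show ?thesis .
  qed
  finally show ?thesis .
qed

lemma pd_kernel_congruence_sym:
  fixes q :: nat and t :: "nat \<Rightarrow> real" and W :: "'m::finite \<Rightarrow> nat \<Rightarrow> real"
  assumes "pd_kernel T \<kappa>" "\<forall>l<q. t l \<in> T"
  shows "transpose (\<chi> k k'. \<Sum>l<q. \<Sum>l'<q. W k l * W k' l' * \<kappa> (t l) (t l')) =
    (\<chi> k k'. \<Sum>l<q. \<Sum>l'<q. W k l * W k' l' * \<kappa> (t l) (t l'))"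
proof -
  have "(\<Sum>l<q. \<Sum>l'<q. W k' l * W k l' * \<kappa> (t l) (t l')) = (\<Sum>l<q. \<Sum>l'<q. W k l * W k' l' * \<kappa> (t l) (t l'))"
    for k k'
  proof -
    have "(\<Sum>l<q. \<Sum>l'<q. W k' l * W k l' * \<kappa> (t l) (t l')) = (\<Sum>l'<q. \<Sum>l<q. W k' l * W k l' * \<kappa> (t l) (t l'))"
      by (rule sum.swap)
    also have "\<dots> = (\<Sum>l'<q. \<Sum>l<q. W k l' * W k' l * \<kappa> (t l') (t l))"
      using assms unfolding pd_kernel_def by (intro sum.cong refl) (simp add: mult_ac)
    finally show ?thesis .
  qed
  then show ?thesis
    by (simp add: transpose_def vec_eq_iff)
qed

lemma normal_rv_cong:
  assumes "normal_rv M Y m v" "\<And>\<omega>. \<omega> \<in> space M \<Longrightarrow> Y \<omega> = Y' \<omega>"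
  shows "normal_rv M Y' m v"
proof -
  have "distr M lborel Y = distr M lborel Y'"
    by (rule distr_cong) (auto simp: assms(2))
  moreover have "Y \<in> measurable M N \<longleftrightarrow> Y' \<in> measurable M N" for N
    by (rule measurable_cong) (simp add: assms(2))
  moreover have "(AE \<omega> in M. Y \<omega> = m) \<longleftrightarrow> (AE \<omega> in M. Y' \<omega> = m)"
    by (rule AE_cong) (simp add: assms(2))
  ultimately show ?thesis
    using assms(1) unfolding normal_rv_def distributed_def by simp
qed

lemma gaussian_vec_linear:
  assumes "gaussian_vec M Y I m C" "finite J"
    and "\<And>\<omega> j. \<omega> \<in> space M \<Longrightarrow> Z \<omega> j = (\<Sum>i\<in>I. L j i * Y \<omega> i)"
  shows "gaussian_vec M Z J (\<lambda>j. \<Sum>i\<in>I. L j i * m i) (\<lambda>j j'. \<Sum>i\<in>I. \<Sum>i'\<in>I. L j i * L j' i' * C i i')"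
  unfolding gaussian_vec_def
proof
  fix c :: "_ \<Rightarrow> real"
  define d where "d i = (\<Sum>j\<in>J. c j * L j i)" for i
  have Y: "normal_rv M (\<lambda>\<omega>. \<Sum>i\<in>I. d i * Y \<omega> i) (\<Sum>i\<in>I. d i * m i) (\<Sum>i\<in>I. \<Sum>i'\<in>I. d i * d i' * C i i')"
    using assms(1) unfolding gaussian_vec_def by blast
  have Z: "(\<Sum>j\<in>J. c j * Z \<omega> j) = (\<Sum>i\<in>I. d i * Y \<omega> i)" if "\<omega> \<in> space M" for \<omega>
    unfolding d_def assms(3)[OF that] sum_distrib_left sum_distrib_right
    by (subst sum.swap) (simp add: mult_ac)
  have mean: "(\<Sum>j\<in>J. c j * (\<Sum>i\<in>I. L j i * m i)) = (\<Sum>i\<in>I. d i * m i)"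
    unfolding d_def sum_distrib_left sum_distrib_right
    by (subst sum.swap) (simp add: mult_ac)
  have var: "(\<Sum>j\<in>J. \<Sum>j'\<in>J. c j * c j' * (\<Sum>i\<in>I. \<Sum>i'\<in>I. L j i * L j' i' * C i i'))
      = (\<Sum>i\<in>I. \<Sum>i'\<in>I. d i * d i' * C i i')"
    unfolding d_def by (rule quadratic_form_lincomb[symmetric])
  show "normal_rv M (\<lambda>\<omega>. \<Sum>j\<in>J. c j * Z \<omega> j) (\<Sum>j\<in>J. c j * (\<Sum>i\<in>I. L j i * m i))
      (\<Sum>j\<in>J. \<Sum>j'\<in>J. c j * c j' * (\<Sum>i\<in>I. \<Sum>i'\<in>I. L j i * L j' i' * C i i'))"
    unfolding mean var using Y by (rule normal_rv_cong) (simp add: Z)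
qed

lemma sum_pair_delta:
  fixes w :: "'l \<Rightarrow> real"
  shows "(\<Sum>y\<in>(UNIV :: 'i::finite set) \<times> B. (case y of (i, l) \<Rightarrow> if i = j then w l else 0) * g y) =
    (\<Sum>l\<in>B. w l * g (j, l))"
proof -
  have "(\<Sum>y\<in>(UNIV :: 'i set) \<times> B. (case y of (i, l) \<Rightarrow> if i = j then w l else 0) * g y)
      = (\<Sum>i\<in>UNIV. \<Sum>l\<in>B. (if i = j then w l else 0) * g (i, l))"
    unfolding sum.cartesian_product by (intro sum.cong) auto
  also have "\<dots> = (\<Sum>i\<in>UNIV. if i = j then (\<Sum>l\<in>B. w l * g (i, l)) else 0)"
    by (intro sum.cong) auto
  finally show ?thesis
    by simp
qed

section \<open>Processes with random coefficients\<close>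

locale sampled_coefficient_process = prob_space M
  for M :: "'w measure" +
  fixes T :: "real set" and \<phi> :: "real \<Rightarrow> real^'m::finite" and A :: "'w \<Rightarrow> real^'p::finite^'m"
    and X :: "'w \<Rightarrow> real \<Rightarrow> real^'p" and \<mu> :: "real \<Rightarrow> real^'p" and Srow :: "real^'p^'p"
    and \<kappa> :: "real \<Rightarrow> real \<Rightarrow> real"
    and q :: nat and tp :: "nat \<Rightarrow> real" and W :: "'m \<Rightarrow> nat \<Rightarrow> real"
  assumes A_rv: "\<forall>k j. (\<lambda>\<omega>. A \<omega> $ k $ j) \<in> borel_measurable M"
    and X_def: "\<forall>\<omega>\<in>space M. \<forall>t\<in>T. X \<omega> t = transpose (A \<omega>) *v \<phi> t"
    and X_L2: "\<forall>j. \<forall>t\<in>T. integrable M (\<lambda>\<omega>. (X \<omega> t $ j)\<^sup>2)"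
    and mean: "\<forall>j. \<forall>t\<in>T. (\<integral>\<omega>. X \<omega> t $ j \<partial>M) = \<mu> t $ j"
    and cov: "\<forall>i j. \<forall>s\<in>T. \<forall>t\<in>T.
      (\<integral>\<omega>. (X \<omega> s $ i - \<mu> s $ i) * (X \<omega> t $ j - \<mu> t $ j) \<partial>M) = Srow $ i $ j * \<kappa> s t"
    and tp_in: "\<forall>l<q. tp l \<in> T"
    and W_recovers_axis: "\<forall>k. (\<Sum>l<q. W k l *\<^sub>R \<phi> (tp l)) = axis k 1"
begin

definition MA :: "real^'p^'m" where
  "MA = (\<chi> k j. \<Sum>l<q. W k l * \<mu> (tp l) $ j)"

definition Scol :: "real^'m^'m" where
  "Scol = (\<chi> k k'. \<Sum>l<q. \<Sum>l'<q. W k l * W k' l' * \<kappa> (tp l) (tp l'))"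

lemma X_nth: "\<omega> \<in> space M \<Longrightarrow> t \<in> T \<Longrightarrow> X \<omega> t $ j = (\<Sum>k\<in>UNIV. A \<omega> $ k $ j * \<phi> t $ k)"
  using X_def by (simp add: matrix_vector_mult_def transpose_def)

lemma A_eq_samples:
  assumes "\<omega> \<in> space M"
  shows "A \<omega> $ k $ j = (\<Sum>l<q. W k l * X \<omega> (tp l) $ j)"
proof -
  have "(\<Sum>l<q. W k l * X \<omega> (tp l) $ j) = (\<Sum>l<q. \<Sum>k'\<in>UNIV. A \<omega> $ k' $ j * (W k l * \<phi> (tp l) $ k'))"
    using assms tp_in by (simp add: X_nth sum_distrib_left mult_ac)
  also have "\<dots> = (\<Sum>k'\<in>UNIV. A \<omega> $ k' $ j * (\<Sum>l<q. W k l * \<phi> (tp l) $ k'))"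
    by (subst sum.swap) (simp add: sum_distrib_left)
  also have "\<dots> = (\<Sum>k'\<in>UNIV. A \<omega> $ k' $ j * axis k 1 $ k')"
  proof -
    have "axis k 1 $ k' = (\<Sum>l<q. W k l * \<phi> (tp l) $ k')" for k'
      by (simp add: W_recovers_axis[rule_format, symmetric])
    then show ?thesis
      by simp
  qed
  also have "\<dots> = (\<Sum>k'\<in>UNIV. if k' = k then A \<omega> $ k' $ j else 0)"
    by (rule sum.cong) (simp_all add: axis_def)
  also have "\<dots> = A \<omega> $ k $ j"
    by simp
  finally show ?thesis
    by simp
qed

lemma square_integrable_X: "t \<in> T \<Longrightarrow> square_integrable M (\<lambda>\<omega>. X \<omega> t $ j)"
  unfolding square_integrable_def
proof
  assume t: "t \<in> T"
  have "(\<lambda>\<omega>. \<Sum>k\<in>UNIV. A \<omega> $ k $ j * \<phi> t $ k) \<in> borel_measurable M"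
    using A_rv by (intro borel_measurable_sum borel_measurable_times) auto
  then show "(\<lambda>\<omega>. X \<omega> t $ j) \<in> borel_measurable M"
    using t by (subst measurable_cong[OF X_nth]) auto
  show "integrable M (\<lambda>\<omega>. (X \<omega> t $ j)\<^sup>2)"
    using X_L2 t by blast
qed

lemma square_integrable_X_centered: "t \<in> T \<Longrightarrow> square_integrable M (\<lambda>\<omega>. X \<omega> t $ j - \<mu> t $ j)"
  by (rule square_integrable_diff[OF square_integrable_X square_integrable_const])

lemma A_centered_eq_samples:
  "\<omega> \<in> space M \<Longrightarrow> A \<omega> $ k $ j - MA $ k $ j = (\<Sum>l<q. W k l * (X \<omega> (tp l) $ j - \<mu> (tp l) $ j))"
  by (simp add: A_eq_samples MA_def right_diff_distrib sum_subtractf)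

lemma square_integrable_A_centered: "square_integrable M (\<lambda>\<omega>. A \<omega> $ k $ j - MA $ k $ j)"
  using tp_in
  by (intro square_integrable_cong[OF A_centered_eq_samples[symmetric]] square_integrable_lincomb
      square_integrable_X_centered) auto

lemma square_integrable_A: "square_integrable M (\<lambda>\<omega>. A \<omega> $ k $ j)"
  using square_integrable_add[OF square_integrable_A_centered[of k j] square_integrable_const[of "MA $ k $ j"]]
  by simp

lemma expectation_A: "(\<integral>\<omega>. A \<omega> $ k $ j \<partial>M) = MA $ k $ j"
proof -
  have "(\<integral>\<omega>. A \<omega> $ k $ j \<partial>M) = (\<integral>\<omega>. (\<Sum>l<q. W k l * X \<omega> (tp l) $ j) \<partial>M)"
    by (intro Bochner_Integration.integral_cong refl) (rule A_eq_samples)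
  also have "\<dots> = (\<Sum>l<q. W k l * \<mu> (tp l) $ j)"
    using tp_in mean square_integrable_X integrable_square_integrable by simp
  finally show ?thesis
    by (simp add: MA_def)
qed

lemma covariance_A:
  "(\<integral>\<omega>. (A \<omega> $ k $ j - MA $ k $ j) * (A \<omega> $ k' $ j' - MA $ k' $ j') \<partial>M) = Srow $ j $ j' * Scol $ k $ k'"
proof -
  have "(\<integral>\<omega>. (A \<omega> $ k $ j - MA $ k $ j) * (A \<omega> $ k' $ j' - MA $ k' $ j') \<partial>M)
      = (\<integral>\<omega>. (\<Sum>l<q. W k l * (X \<omega> (tp l) $ j - \<mu> (tp l) $ j)) *
            (\<Sum>l'<q. W k' l' * (X \<omega> (tp l') $ j' - \<mu> (tp l') $ j')) \<partial>M)"
    by (intro Bochner_Integration.integral_cong refl) (simp add: A_centered_eq_samples)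
  also have "\<dots> = (\<Sum>l<q. \<Sum>l'<q. W k l * W k' l' * (Srow $ j $ j' * \<kappa> (tp l) (tp l')))"
    using tp_in cov
    by (subst integral_lincomb_mult_lincomb)
      (auto intro: square_integrable_X_centered)
  also have "\<dots> = Srow $ j $ j' * Scol $ k $ k'"
    by (simp add: Scol_def sum_distrib_left mult_ac)
  finally show ?thesis .
qed

lemma mean_eq_MA:
  assumes "t \<in> T"
  shows "transpose MA *v \<phi> t = \<mu> t"
proof -
  have "\<mu> t $ j = (\<integral>\<omega>. (\<Sum>k\<in>UNIV. A \<omega> $ k $ j * \<phi> t $ k) \<partial>M)" for j
    using mean assms by (simp add: X_nth cong: Bochner_Integration.integral_cong)
  also have "\<dots> j = (\<Sum>k\<in>UNIV. MA $ k $ j * \<phi> t $ k)" for j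
    using square_integrable_A integrable_square_integrable by (simp add: expectation_A)
  finally show ?thesis
    by (simp add: vec_eq_iff matrix_vector_mult_def transpose_def)
qed

lemma X_centered_eq:
  assumes "\<omega> \<in> space M" "t \<in> T"
  shows "X \<omega> t - \<mu> t = transpose (A \<omega> - MA) *v \<phi> t"
proof -
  have "X \<omega> t = transpose (A \<omega>) *v \<phi> t" "\<mu> t = transpose MA *v \<phi> t"
    using assms X_def mean_eq_MA by simp_all
  then show ?thesis
    by (simp add: vec_eq_iff vector_matrix_mult_def right_diff_distrib sum_subtractf)
qed

lemma X_centered_nth:
  "\<omega> \<in> space M \<Longrightarrow> t \<in> T \<Longrightarrow> X \<omega> t $ j - \<mu> t $ j = (\<Sum>k\<in>UNIV. \<phi> t $ k * (A \<omega> $ k $ j - MA $ k $ j))"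
  using X_centered_eq[of \<omega> t] by (simp add: vec_eq_iff matrix_vector_mult_def transpose_def mult.commute)

lemma phi_Scol_phi:
  assumes "sym_posdef Srow" "s \<in> T" "t \<in> T"
  shows "\<phi> s \<bullet> (Scol *v \<phi> t) = \<kappa> s t"
proof -
  fix j :: 'p
  have "Srow $ j $ j * \<kappa> s t = (\<integral>\<omega>. (X \<omega> s $ j - \<mu> s $ j) * (X \<omega> t $ j - \<mu> t $ j) \<partial>M)"
    using cov assms(2,3) by simp
  also have "\<dots> = (\<integral>\<omega>. (\<Sum>k\<in>UNIV. \<phi> s $ k * (A \<omega> $ k $ j - MA $ k $ j)) *
      (\<Sum>k'\<in>UNIV. \<phi> t $ k' * (A \<omega> $ k' $ j - MA $ k' $ j)) \<partial>M)"
    using assms(2,3) by (intro Bochner_Integration.integral_cong refl) (simp add: X_centered_nth)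
  also have "\<dots> = (\<Sum>k\<in>UNIV. \<Sum>k'\<in>UNIV. \<phi> s $ k * \<phi> t $ k' * (Srow $ j $ j * Scol $ k $ k'))"
    by (subst integral_lincomb_mult_lincomb) (auto simp: square_integrable_A_centered covariance_A)
  also have "\<dots> = Srow $ j $ j * (\<phi> s \<bullet> (Scol *v \<phi> t))"
    by (simp add: inner_vec_def matrix_vector_mult_def sum_distrib_left mult_ac)
  finally show ?thesis
    using sym_posdef_diag_pos[OF assms(1), of j] by simp
qed

lemma Scol_posdef:
  assumes "pd_kernel T \<kappa>" "sym_posdef Srow" "\<forall>k. sq_int T (\<lambda>t. \<phi> t $ k)"
    and "op_rank T (\<lambda>s t. Srow $ j $ j * \<kappa> s t) CARD('m)"
  shows "sym_posdef Scol"
proof (rule sym_psd_invertible_posdef)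
  show "transpose Scol = Scol"
    unfolding Scol_def by (rule pd_kernel_congruence_sym[OF assms(1) tp_in])
  show "0 \<le> v \<bullet> (Scol *v v)" for v
    unfolding Scol_def by (rule pd_kernel_congruence_psd[OF assms(1) tp_in])
  show "invertible Scol"
    using assms(2-4) phi_Scol_phi unfolding op_rank_def
    by (intro op_rank_ge_imp_invertible[of T \<phi> "\<lambda>s t. Srow $ j $ j * \<kappa> s t" "Srow $ j $ j"]) auto
qed

lemma matrix_normal_A:
  assumes "is_MGP M T X \<mu> Srow \<kappa>" "\<forall>l l'. l < l' \<and> l' < q \<longrightarrow> tp l < tp l'"
  shows "matrix_normal M (\<lambda>\<omega> k j. A \<omega> $ k $ j) UNIV UNIV (\<lambda>k j. MA $ k $ j)
    (\<lambda>k k'. Scol $ k $ k') (\<lambda>j j'. Srow $ j $ j')"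
proof -
  define L :: "'m \<times> 'p \<Rightarrow> 'p \<times> nat \<Rightarrow> real" where
    "L x y = (case y of (i, l) \<Rightarrow> if i = snd x then W (fst x) l else 0)" for x y
  define C :: "'p \<times> nat \<Rightarrow> 'p \<times> nat \<Rightarrow> real" where
    "C = (\<lambda>(i, l) (i', l'). \<kappa> (tp l) (tp l') * Srow $ i $ i')"
  have "gaussian_vec M (\<lambda>\<omega> (i, l). X \<omega> (tp l) $ i) (UNIV \<times> {..<q}) (\<lambda>(i, l). \<mu> (tp l) $ i) C"
    using assms tp_in unfolding is_MGP_def matrix_normal_def C_def by blast
  then have "gaussian_vec M (\<lambda>\<omega> (k, j). A \<omega> $ k $ j) (UNIV \<times> UNIV)
      (\<lambda>x. \<Sum>y\<in>UNIV \<times> {..<q}. L x y * (case y of (i, l) \<Rightarrow> \<mu> (tp l) $ i))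
      (\<lambda>x x'. \<Sum>y\<in>UNIV \<times> {..<q}. \<Sum>y'\<in>UNIV \<times> {..<q}. L x y * L x' y' * C y y')"
    by (rule gaussian_vec_linear) (auto simp: L_def sum_pair_delta A_eq_samples split: prod.splits)
  moreover have "(\<lambda>x. \<Sum>y\<in>UNIV \<times> {..<q}. L x y * (case y of (i, l) \<Rightarrow> \<mu> (tp l) $ i)) = (\<lambda>(k, j). MA $ k $ j)"
    by (auto simp: L_def sum_pair_delta MA_def)
  moreover have "(\<Sum>y\<in>UNIV \<times> {..<q}. \<Sum>y'\<in>UNIV \<times> {..<q}. L x y * L x' y' * C y y')
      = Srow $ snd x $ snd x' * Scol $ fst x $ fst x'" for x x'
  proof -
    have "(\<Sum>y'\<in>UNIV \<times> {..<q}. L x' y' * C y y') = (\<Sum>l'<q. W (fst x') l' * C y (snd x', l'))" for y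
      unfolding L_def by (rule sum_pair_delta)
    then have "(\<Sum>y\<in>UNIV \<times> {..<q}. \<Sum>y'\<in>UNIV \<times> {..<q}. L x y * L x' y' * C y y')
        = (\<Sum>y\<in>UNIV \<times> {..<q}. L x y * (\<Sum>l'<q. W (fst x') l' * C y (snd x', l')))"
      by (simp add: sum_distrib_left[symmetric] mult.assoc)
    also have "\<dots> = (\<Sum>l<q. W (fst x) l * (\<Sum>l'<q. W (fst x') l' * C (snd x, l) (snd x', l')))"
      unfolding L_def by (rule sum_pair_delta)
    also have "\<dots> = Srow $ snd x $ snd x' * Scol $ fst x $ fst x'"
      by (simp add: C_def Scol_def sum_distrib_left mult_ac)
    finally show ?thesis .
  qed
  ultimately show ?thesis
    unfolding matrix_normal_def by (simp add: case_prod_beta')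
qed

lemma fMMD2_eq_MMD2:
  assumes "L2_independent_family T \<phi>" "sym_posdef Scol" "sym_posdef Srow"
    and "eigsys T (\<lambda>s t. \<kappa> s t *\<^sub>R Srow) \<psi> \<pi>" "\<omega> \<in> space M"
  shows "fMMD2 T \<psi> \<pi> (X \<omega>) \<mu> (CARD('m) * CARD('p)) = MMD2 MA Scol Srow (A \<omega>)"
proof -
  have "phi_kernel_eigensystem T \<phi> Scol Srow (\<lambda>s t. \<kappa> s t *\<^sub>R Srow) \<psi> \<pi>"
    using assms phi_Scol_phi
    unfolding phi_kernel_eigensystem_def phi_kernel_eigensystem_axioms_def
      phi_separable_kernel_def phi_separable_kernel_axioms_def
    by auto
  then interpret phi_kernel_eigensystem T \<phi> Scol Srow "\<lambda>s t. \<kappa> s t *\<^sub>R Srow" \<psi> \<pi> .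
  have "fMMD2 T \<psi> \<pi> (X \<omega>) \<mu> (CARD('m) * CARD('p))
      = (\<Sum>k<DIM(real^'p^'m). inverse (\<pi> k) * (Hip T (phi_comb (A \<omega> - MA)) (\<psi> k))\<^sup>2)"
    unfolding fMMD2_def using X_centered_eq[OF assms(5)]
    by (simp add: phi_comb_def mult.commute cong: Hip_cong)
  also have "\<dots> = MMD2 MA Scol Srow (A \<omega>)"
    using weighted_eigen_sum_phi_comb[of "A \<omega> - MA"] by (simp add: MMD2_eq_inner)
  finally show ?thesis .
qed

end

theorem theorem1:
  fixes M :: "'w measure"
    and a b :: real
    and \<phi> :: "real \<Rightarrow> real^'m::finite"
    and A :: "'w \<Rightarrow> real^'p::finite^'m"
    and X :: "'w \<Rightarrow> real \<Rightarrow> real^'p"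
    and \<mu> :: "real \<Rightarrow> real^'p"
    and Srow :: "real^'p^'p"
    and \<kappa> :: "real \<Rightarrow> real \<Rightarrow> real"
  assumes "prob_space M"
    and "a < b"
    and phi_L2: "\<forall>k. sq_int {a..b} (\<lambda>t. \<phi> t $ k)"
    and phi_indep: "L2_lin_indep {a..b} \<phi>"
    and A_rv: "\<forall>k j. (\<lambda>\<omega>. A \<omega> $ k $ j) \<in> borel_measurable M"
    and X_def: "\<forall>\<omega>\<in>space M. \<forall>t\<in>{a..b}. X \<omega> t = transpose (A \<omega>) *v \<phi> t"
    and X_L2: "\<forall>j. \<forall>t\<in>{a..b}. integrable M (\<lambda>\<omega>. (X \<omega> t $ j)\<^sup>2)"
    and mean: "\<forall>j. \<forall>t\<in>{a..b}. (\<integral>\<omega>. X \<omega> t $ j \<partial>M) = \<mu> t $ j"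
    and Srow_pd: "sym_posdef Srow"
    and kappa_pd: "pd_kernel {a..b} \<kappa>"
    and cov: "\<forall>i j. \<forall>s\<in>{a..b}. \<forall>t\<in>{a..b}.
               (\<integral>\<omega>. (X \<omega> s $ i - \<mu> s $ i) * (X \<omega> t $ j - \<mu> t $ j) \<partial>M) = Srow $ i $ j * \<kappa> s t"
    and rank: "\<forall>j. op_rank {a..b} (\<lambda>s t. Srow $ j $ j * \<kappa> s t) CARD('m)"
  shows "\<exists>(MA :: real^'p^'m) (Scol :: real^'m^'m).
     sym_posdef Scol \<and>
     (\<forall>k j. integrable M (\<lambda>\<omega>. (A \<omega> $ k $ j)\<^sup>2)) \<and>
     (\<forall>k j. (\<integral>\<omega>. A \<omega> $ k $ j \<partial>M) = MA $ k $ j) \<and>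
     (\<forall>k j k' j'. (\<integral>\<omega>. (A \<omega> $ k $ j - MA $ k $ j) * (A \<omega> $ k' $ j' - MA $ k' $ j') \<partial>M)
                   = Srow $ j $ j' * Scol $ k $ k') \<and>
     (\<forall>t\<in>{a..b}. transpose MA *v \<phi> t = \<mu> t) \<and>
     (\<forall>s\<in>{a..b}. \<forall>t\<in>{a..b}. \<phi> s \<bullet> (Scol *v \<phi> t) = \<kappa> s t) \<and>
     (\<forall>\<psi> \<pi>. eigsys {a..b} (\<lambda>s t. \<kappa> s t *\<^sub>R Srow) \<psi> \<pi> \<longrightarrow>
        (\<forall>\<omega>\<in>space M. fMMD2 {a..b} \<psi> \<pi> (X \<omega>) \<mu> (CARD('m) * CARD('p)) = MMD2 MA Scol Srow (A \<omega>))) \<and>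
     (is_MGP M {a..b} X \<mu> Srow \<kappa> \<longrightarrow>
        matrix_normal M (\<lambda>\<omega> k j. A \<omega> $ k $ j) UNIV UNIV (\<lambda>k j. MA $ k $ j)
          (\<lambda>k k'. Scol $ k $ k') (\<lambda>j j'. Srow $ j $ j'))"
proof -
  interpret prob_space M by fact
  have family: "L2_independent_family {a..b} \<phi>"
    using phi_L2 phi_indep by unfold_locales
  obtain q :: nat and tp :: "nat \<Rightarrow> real" and W :: "'m \<Rightarrow> nat \<Rightarrow> real"
    where tp_in: "\<forall>l<q. tp l \<in> {a..b}"
    and tp_mono: "\<forall>l l'. l < l' \<and> l' < q \<longrightarrow> tp l < tp l'"
    and W: "\<forall>k. (\<Sum>l<q. W k l *\<^sub>R \<phi> (tp l)) = axis k 1"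
    by (rule L2_independent_family.sampling_design_exists[OF family])
  interpret sampled_coefficient_process M "{a..b}" \<phi> A X \<mu> Srow \<kappa> q tp W
    by unfold_locales (fact A_rv X_def X_L2 mean cov tp_in W)+
  have Scol: "sym_posdef Scol"
    using Scol_posdef[OF kappa_pd Srow_pd phi_L2 spec[OF rank]] .
  show ?thesis
    using Scol square_integrable_A[unfolded square_integrable_def] expectation_A covariance_A
      mean_eq_MA phi_Scol_phi[OF Srow_pd] fMMD2_eq_MMD2[OF family Scol Srow_pd] matrix_normal_A tp_mono
    by (intro exI[of _ MA] exI[of _ Scol] conjI allI ballI impI) auto
qed

end
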